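(* Let $R\subseteq\mathbb R$ be an archimedean real closed field, let $F$ be a formally real extension field of $R$, and let $\xi$ be an $\mathbb R$-place of $F$ with $\xi|_R=\mathrm{id}_R$; put $\overline F=\xi(F)\setminus\{\infty\}\subseteq\mathbb R$. Let $\xi_y$ be the constant extension of $\xi$ to $F(y)$, and for $\zeta\in M(R(y))$ let $\zeta_{\overline F}$ be the constant extension of $\zeta$ to $\overline F(y)$. Then the map $\iota:M(R(y))\to M(F(y))$, $\iota(\zeta)=\zeta_{\overline F}\circ\xi_y$, is a continuous injective map.
   Context: For a field $K$, $M(K)$ is the set of $\mathbb R$-places $K\to\mathbb R\cup\{\infty\}$, with topology generated by the subbasis $H'(b)=\{\zeta\in M(K)\mid \infty\ne\zeta(b)>0\}$, $b\in K$. The constant (Gauss) extension $\xi_y$ of $\xi$ to $F(y)$ is the place of $F(y)$ extending $\xi$ whose valuation is the Gauss valuation: on a polynomial $\sum c_iy^i\in F[y]$ with all $c_i$ in the valuation ring of $\xi$ it acts by applying $\xi$ to the coefficients, and its residue field is $\overline F(y)$. Every $\zeta\in M(R(y))$ is the identity on $R$; its constant extension $\zeta_{\overline F}$ is the unique $\mathbb R$-place of $\overline F(y)$ which is the identity on $\overline F$ and satisfies $\zeta_{\overline F}(y)=\zeta(y)$ (if $\zeta(y)=a\in R$ this is the place determined by $y-a$, if $\zeta(y)=\infty$ the place determined by $1/y$). $R(y)$, $F(y)$, $\overline F(y)$ are rational function fields in one variable $y$. *)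

theory Defs
  imports "HOL-Analysis.Analysis" "HOL-Computational_Algebra.Polynomial"
          "HOL-Computational_Algebra.Fraction_Field"
begin

text \<open>Values in L \<union> {\<infinity>} are modelled by option: None = \<infinity>.\<close>

definition is_subfield :: "'a::field set \<Rightarrow> bool" where
  "is_subfield K \<longleftrightarrow> 0 \<in> K \<and> 1 \<in> K \<and>
     (\<forall>a\<in>K. \<forall>b\<in>K. a + b \<in> K \<and> a * b \<in> K) \<and>
     (\<forall>a\<in>K. - a \<in> K) \<and> (\<forall>a\<in>K. a \<noteq> 0 \<longrightarrow> inverse a \<in> K)"

definition real_closed_subfield :: "real set \<Rightarrow> bool" where
  "real_closed_subfield R \<longleftrightarrow> is_subfield R \<and>
     (\<forall>a\<in>R. a \<ge> 0 \<longrightarrow> (\<exists>b\<in>R. b * b = a)) \<and>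
     (\<forall>p::real poly. (\<forall>i. coeff p i \<in> R) \<and> odd (degree p) \<longrightarrow> (\<exists>x\<in>R. poly p x = 0))"

definition archimedean_set :: "real set \<Rightarrow> bool" where
  "archimedean_set R \<longleftrightarrow> (\<forall>x\<in>R. \<exists>n::nat. x < of_nat n)"

definition formally_real :: "'f::field itself \<Rightarrow> bool" where
  "formally_real _ \<longleftrightarrow> \<not> (\<exists>xs::'f list. sum_list (map (\<lambda>x. x * x) xs) = -1)"

definition field_embedding_on :: "real set \<Rightarrow> (real \<Rightarrow> 'f::field) \<Rightarrow> bool" where
  "field_embedding_on R e \<longleftrightarrow> e 1 = 1 \<and> inj_on e R \<and>
     (\<forall>a\<in>R. \<forall>b\<in>R. e (a + b) = e a + e b \<and> e (a * b) = e a * e b)"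

definition place_on :: "'a::field set \<Rightarrow> 'b::field set \<Rightarrow> ('a \<Rightarrow> 'b option) \<Rightarrow> bool" where
  "place_on K L P \<longleftrightarrow>
     (\<forall>a\<in>K. \<forall>x. P a = Some x \<longrightarrow> x \<in> L) \<and>
     P 1 = Some 1 \<and>
     (\<forall>a\<in>K. \<forall>b\<in>K. \<forall>x y. P a = Some x \<and> P b = Some y \<longrightarrow>
          P (a + b) = Some (x + y) \<and> P (a * b) = Some (x * y)) \<and>
     (\<forall>a\<in>K. a \<noteq> 0 \<longrightarrow> (P a = None \<longleftrightarrow> P (inverse a) = Some 0))"

definition M :: "'a::field set \<Rightarrow> ('a \<Rightarrow> real option) set" where
  "M K = {P. place_on K UNIV P \<and> (\<forall>a. a \<notin> K \<longrightarrow> P a = None)}"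

definition H' :: "'a::field set \<Rightarrow> 'a \<Rightarrow> ('a \<Rightarrow> real option) set" where
  "H' K b = {\<zeta> \<in> M K. \<exists>r. \<zeta> b = Some r \<and> r > 0}"

definition Mtop :: "'a::field set \<Rightarrow> ('a \<Rightarrow> real option) topology" where
  "Mtop K = topology_generated_by {H' K b | b. b \<in> K}"

definition ratfun :: "real set \<Rightarrow> real poly fract set" where
  "ratfun S = {Fract p q | p q. q \<noteq> 0 \<and> (\<forall>i. coeff p i \<in> S) \<and> (\<forall>i. coeff q i \<in> S)}"

definition yvar :: "'a::field poly fract" where
  "yvar = Fract [:0, 1:] 1"

definition cst :: "'a::field \<Rightarrow> 'a poly fract" where
  "cst c = Fract [:c:] 1"

definition residue_field :: "('f::field \<Rightarrow> real option) \<Rightarrow> real set" where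
  "residue_field \<xi> = {r. \<exists>x. \<xi> x = Some r}"

definition gauss_ext :: "('f::field \<Rightarrow> real option) \<Rightarrow> ('f poly fract \<Rightarrow> real poly fract option)" where
  "gauss_ext \<xi> = (THE P. place_on UNIV (ratfun (residue_field \<xi>)) P \<and>
      (\<forall>p. (\<forall>i. \<xi> (coeff p i) \<noteq> None) \<longrightarrow>
            P (Fract p 1) = Some (Fract (map_poly (\<lambda>c. the (\<xi> c)) p) 1)))"

definition const_ext :: "real set \<Rightarrow> (real poly fract \<Rightarrow> real option) \<Rightarrow> (real poly fract \<Rightarrow> real option)" where
  "const_ext Fb \<zeta> = (THE Q. Q \<in> M (ratfun Fb) \<and> (\<forall>c\<in>Fb. Q (cst c) = Some c) \<and> Q yvar = \<zeta> yvar)"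

definition comp_place :: "('b \<Rightarrow> real option) \<Rightarrow> ('a \<Rightarrow> 'b option) \<Rightarrow> 'a \<Rightarrow> real option" where
  "comp_place Q P a = (case P a of None \<Rightarrow> None | Some b \<Rightarrow> Q b)"

definition iota :: "('f::field \<Rightarrow> real option) \<Rightarrow> (real poly fract \<Rightarrow> real option) \<Rightarrow> ('f poly fract \<Rightarrow> real option)" where
  "iota \<xi> \<zeta> = comp_place (const_ext (residue_field \<xi>) \<zeta>) (gauss_ext \<xi>)"

end

theory Submission
  imports Defs
begin

text \<open>An \<open>\<real>\<close>-place \<open>\<zeta>\<close> of \<open>R(y)\<close> is the identity on \<open>R\<close> (nonnegative elements of \<open>R\<close> are squares
  and \<open>R \<subseteq> \<real>\<close>), hence it is determined by \<open>\<zeta>(y) \<in> \<real> \<union> {\<infinity>}\<close>: it sends \<open>f\<close> to the limit of \<open>f(t)\<close>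
  for \<open>t \<rightarrow> \<zeta>(y)\<close>. So \<open>\<iota>(\<zeta>)\<close> sends \<open>f\<close> to the limit of the Gauss reduction \<open>\<xi>\<^sub>y(f)\<close> at \<open>\<zeta>(y)\<close>; in
  particular \<open>\<iota>(\<zeta>)(y) = \<zeta>(y)\<close>, which gives injectivity. For continuity, positivity of the limit of
  a real rational function at \<open>t\<close> is an open condition in \<open>t \<in> \<real> \<union> {\<infinity>}\<close>, and the neighbourhoods
  \<open>c < y < d\<close> and \<open>\<bar>y\<bar> > c\<close> (\<open>c, d \<in> \<rat>\<close>) are the basic open sets \<open>H'((y - c)(d - y))\<close> and
  \<open>H'(y\<^sup>2 / (y\<^sup>2 - c\<^sup>2))\<close> of \<open>M(R(y))\<close>.\<close>

lemma is_subfield_UNIV: "is_subfield (UNIV :: 'a::field set)"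
  by (simp add: is_subfield_def)

lemma is_subfieldD:
  assumes "is_subfield K"
  shows "0 \<in> K" "1 \<in> K" "a \<in> K \<Longrightarrow> b \<in> K \<Longrightarrow> a + b \<in> K"
    "a \<in> K \<Longrightarrow> b \<in> K \<Longrightarrow> a * b \<in> K" "a \<in> K \<Longrightarrow> - a \<in> K"
    "a \<in> K \<Longrightarrow> inverse a \<in> K"
  using assms unfolding is_subfield_def by auto

lemma is_subfield_diff: "is_subfield K \<Longrightarrow> a \<in> K \<Longrightarrow> b \<in> K \<Longrightarrow> a - b \<in> K"
  by (metis diff_conv_add_uminus is_subfieldD(3,5))

lemma is_subfield_divide: "is_subfield K \<Longrightarrow> a \<in> K \<Longrightarrow> b \<in> K \<Longrightarrow> a / b \<in> K"
  by (simp add: divide_inverse is_subfieldD)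

lemma is_subfield_power: "is_subfield K \<Longrightarrow> a \<in> K \<Longrightarrow> a ^ n \<in> K"
  by (induction n) (auto intro: is_subfieldD)

lemma is_subfield_sum: "is_subfield K \<Longrightarrow> (\<And>i. i \<in> I \<Longrightarrow> g i \<in> K) \<Longrightarrow> sum g I \<in> K"
  by (induction I rule: infinite_finite_induct) (auto intro: is_subfieldD)

lemma is_subfield_of_nat: "is_subfield K \<Longrightarrow> of_nat n \<in> K"
  by (induction n) (auto intro: is_subfieldD)

lemma is_subfield_of_int: "is_subfield K \<Longrightarrow> of_int k \<in> K"
  by (cases k rule: int_cases) (auto intro: is_subfieldD is_subfield_of_nat simp del: of_nat_Suc)

lemma Rats_subset_subfield: "is_subfield K \<Longrightarrow> \<rat> \<subseteq> K"
  by (auto elim!: Rats_cases' intro!: is_subfield_divide is_subfield_of_int)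

lemma place_on_range: "place_on K L P \<Longrightarrow> a \<in> K \<Longrightarrow> P a = Some x \<Longrightarrow> x \<in> L"
  unfolding place_on_def by auto

lemma place_on_one: "place_on K L P \<Longrightarrow> P 1 = Some 1"
  unfolding place_on_def by blast

lemma place_on_add:
  "place_on K L P \<Longrightarrow> a \<in> K \<Longrightarrow> b \<in> K \<Longrightarrow> P a = Some x \<Longrightarrow> P b = Some y \<Longrightarrow> P (a + b) = Some (x + y)"
  unfolding place_on_def by auto

lemma place_on_mult:
  "place_on K L P \<Longrightarrow> a \<in> K \<Longrightarrow> b \<in> K \<Longrightarrow> P a = Some x \<Longrightarrow> P b = Some y \<Longrightarrow> P (a * b) = Some (x * y)"
  unfolding place_on_def by auto

lemma place_on_None_iff:
  "place_on K L P \<Longrightarrow> a \<in> K \<Longrightarrow> a \<noteq> 0 \<Longrightarrow> P a = None \<longleftrightarrow> P (inverse a) = Some 0"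
  unfolding place_on_def by blast

lemma place_on_minus_one:
  assumes P: "place_on K L P" and K: "is_subfield K"
  shows "P (-1) = Some (-1)"
proof -
  have m1: "-1 \<in> K" using is_subfieldD[OF K] by blast
  obtain m where m: "P (-1) = Some m"
    using place_on_None_iff[OF P m1] by fastforce
  have z: "P 0 = Some (1 + m)"
    using place_on_add[OF P _ m1 place_on_one[OF P] m] is_subfieldD(2)[OF K] by simp
  then have "P (0 + 0) = Some ((1 + m) + (1 + m))"
    using place_on_add[OF P _ _ z z] is_subfieldD(1)[OF K] by blast
  then show ?thesis using m z by (simp add: eq_neg_iff_add_eq_0 add.commute)
qed

lemma place_on_zero:
  assumes P: "place_on K L P" and K: "is_subfield K"
  shows "P 0 = Some 0"
  using place_on_add[OF P is_subfieldD(2,5)[OF K] place_on_one[OF P] place_on_minus_one[OF P K]]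
    is_subfieldD(2)[OF K] by simp

lemma place_on_uminus:
  assumes P: "place_on K L P" and K: "is_subfield K" and a: "a \<in> K" "P a = Some x"
  shows "P (- a) = Some (- x)"
  using place_on_mult[OF P _ a(1) place_on_minus_one[OF P K] a(2)] is_subfieldD(2,5)[OF K] by simp

lemma place_on_diff:
  assumes P: "place_on K L P" and K: "is_subfield K" and ab: "a \<in> K" "b \<in> K"
    and "P a = Some x" "P b = Some y"
  shows "P (a - b) = Some (x - y)"
  using place_on_add[OF P ab(1) is_subfieldD(5)[OF K ab(2)] assms(5) place_on_uminus[OF P K ab(2) assms(6)]]
  by simp

lemma place_on_inverse:
  assumes P: "place_on K L P" and K: "is_subfield K" and a: "a \<in> K" "P a = Some x" "x \<noteq> 0"
  shows "P (inverse a) = Some (inverse x)"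
proof -
  have a0: "a \<noteq> 0" using a place_on_zero[OF P K] by auto
  have ia: "inverse a \<in> K" "inverse a \<noteq> 0" using is_subfieldD(6)[OF K a(1)] a0 by auto
  obtain z where z: "P (inverse a) = Some z"
    using place_on_None_iff[OF P ia] a by fastforce
  have "P (a * inverse a) = Some (x * z)" using place_on_mult[OF P a(1) ia(1) a(2) z] .
  then have "x * z = 1" using a0 place_on_one[OF P] by simp
  then show ?thesis using z a(3) by (simp add: field_simps)
qed

lemma place_on_inverse_of_zero:
  "place_on K L P \<Longrightarrow> is_subfield K \<Longrightarrow> a \<in> K \<Longrightarrow> a \<noteq> 0 \<Longrightarrow> P a = Some 0 \<Longrightarrow> P (inverse a) = None"
  using place_on_None_iff[of K L P "inverse a"] is_subfieldD(6) by fastforce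

lemma place_on_inverse_of_None:
  "place_on K L P \<Longrightarrow> a \<in> K \<Longrightarrow> a \<noteq> 0 \<Longrightarrow> P a = None \<Longrightarrow> P (inverse a) = Some 0"
  using place_on_None_iff by blast

lemma place_on_add_None:
  assumes P: "place_on K L P" and K: "is_subfield K" and ab: "a \<in> K" "b \<in> K"
    and "P a = Some x" "P b = None"
  shows "P (a + b) = None"
proof (rule ccontr)
  assume "P (a + b) \<noteq> None"
  then obtain z where "P (a + b) = Some z" by auto
  then have "P ((a + b) - a) = Some (z - x)"
    using place_on_diff[OF P K _ ab(1)] is_subfieldD(3)[OF K ab] assms(5) by blast
  then show False using assms(6) by simp
qed

lemma place_on_mult_None:
  assumes P: "place_on K L P" and K: "is_subfield K" and ab: "a \<in> K" "b \<in> K"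
    and "P a = None" "P b = Some y" "y \<noteq> 0"
  shows "P (a * b) = None"
proof (rule ccontr)
  assume "P (a * b) \<noteq> None"
  then obtain z where z: "P (a * b) = Some z" by auto
  have "b \<noteq> 0" using assms place_on_zero[OF P K] by auto
  moreover have "P ((a * b) * inverse b) = Some (z * inverse y)"
    using place_on_mult[OF P is_subfieldD(4)[OF K ab] is_subfieldD(6)[OF K ab(2)] z
        place_on_inverse[OF P K ab(2) assms(6,7)]] .
  ultimately show False using assms(5) by (simp add: mult.assoc)
qed

lemma place_on_inverse_cong:
  assumes P: "place_on K L P" and P': "place_on K L' P'" and K: "is_subfield K"
    and x: "x \<in> K" "x \<noteq> 0" "P x = P' x"
  shows "P (inverse x) = P' (inverse x)"
proof (cases "P x")
  case None
  then show ?thesis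
    using place_on_inverse_of_None[OF P x(1,2)] place_on_inverse_of_None[OF P' x(1,2)] x(3)
    by simp
next
  case (Some v)
  then show ?thesis
    using place_on_inverse_of_zero[OF P K x(1,2)] place_on_inverse_of_zero[OF P' K x(1,2)]
      place_on_inverse[OF P K x(1) Some] place_on_inverse[OF P' K x(1)] x(3)
    by (cases "v = 0") simp_all
qed

lemma place_on_comp_place:
  assumes P: "place_on UNIV L P" and Q: "place_on L UNIV Q" and L: "is_subfield L"
  shows "place_on UNIV UNIV (comp_place Q P)"
  unfolding place_on_def
proof (intro conjI ballI allI impI)
  show "comp_place Q P 1 = Some 1"
    using place_on_one[OF P] place_on_one[OF Q] by (simp add: comp_place_def)
next
  fix a b x y assume "comp_place Q P a = Some x \<and> comp_place Q P b = Some y"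
  then obtain g h where g: "P a = Some g" "Q g = Some x" and h: "P b = Some h" "Q h = Some y"
    by (auto simp: comp_place_def split: option.splits)
  have gh: "g \<in> L" "h \<in> L" using place_on_range[OF P _ g(1)] place_on_range[OF P _ h(1)] by auto
  show "comp_place Q P (a + b) = Some (x + y)"
    using place_on_add[OF P _ _ g(1) h(1)] place_on_add[OF Q gh g(2) h(2)]
    by (simp add: comp_place_def)
  show "comp_place Q P (a * b) = Some (x * y)"
    using place_on_mult[OF P _ _ g(1) h(1)] place_on_mult[OF Q gh g(2) h(2)]
    by (simp add: comp_place_def)
next
  fix a :: 'a assume a0: "a \<noteq> 0"
  show "comp_place Q P a = None \<longleftrightarrow> comp_place Q P (inverse a) = Some 0"
  proof (cases "P a")
    case None
    then show ?thesis using place_on_inverse_of_None[OF P _ a0] place_on_zero[OF Q L]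
      by (simp add: comp_place_def)
  next
    case (Some g)
    have "g \<in> L" using place_on_range[OF P _ Some] by auto
    then show ?thesis
      using place_on_inverse_of_zero[OF P is_subfield_UNIV _ a0] place_on_zero[OF Q L]
        place_on_inverse[OF P is_subfield_UNIV _ Some] place_on_None_iff[OF Q] Some
      by (cases "g = 0") (simp_all add: comp_place_def)
  qed
qed auto

lemma place_on_restrict:
  assumes P: "place_on UNIV UNIV P" and K: "is_subfield K"
  shows "place_on K UNIV (\<lambda>x. if x \<in> K then P x else None)"
  using place_on_one[OF P] place_on_add[OF P] place_on_mult[OF P] place_on_None_iff[OF P]
    is_subfieldD[OF K]
  unfolding place_on_def by (auto split: if_splits)

lemma is_subfield_residue_field:
  assumes P: "place_on UNIV UNIV \<xi>"
  shows "is_subfield (residue_field \<xi>)"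
proof -
  have "x + y \<in> residue_field \<xi> \<and> x * y \<in> residue_field \<xi>"
    if "\<xi> a = Some x" "\<xi> b = Some y" for a b x y
    using place_on_add[OF P _ _ that] place_on_mult[OF P _ _ that] unfolding residue_field_def
    by blast
  moreover have "- x \<in> residue_field \<xi> \<and> (x \<noteq> 0 \<longrightarrow> inverse x \<in> residue_field \<xi>)"
    if "\<xi> a = Some x" for a x
    using place_on_uminus[OF P is_subfield_UNIV _ that] place_on_inverse[OF P is_subfield_UNIV _ that]
    unfolding residue_field_def by blast
  moreover have "0 \<in> residue_field \<xi>" "1 \<in> residue_field \<xi>"
    using place_on_zero[OF P is_subfield_UNIV] place_on_one[OF P] unfolding residue_field_def
    by blast+
  ultimately show ?thesis unfolding is_subfield_def residue_field_def by blast
qed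

lemma place_on_add_cong:
  assumes P: "place_on K L P" and P': "place_on K L' P'" and K: "is_subfield K"
    and ab: "a \<in> K" "b \<in> K" and "P a = Some x" "P' a = Some x" "P b = P' b"
  shows "P (a + b) = P' (a + b)"
proof (cases "P b")
  case None
  then show ?thesis
    using place_on_add_None[OF P K ab] place_on_add_None[OF P' K ab] assms(6-8) by simp
next
  case (Some y)
  then show ?thesis using place_on_add[OF P ab] place_on_add[OF P' ab] assms(6-8) by simp
qed

locale real_valued_place =
  fixes \<xi> :: "'f::field \<Rightarrow> real option"
  assumes \<xi>_place: "place_on UNIV UNIV \<xi>"
begin

definition residue :: "'f \<Rightarrow> real" where "residue c = the (\<xi> c)"
definition integral_poly :: "'f poly \<Rightarrow> bool" where "integral_poly p \<longleftrightarrow> (\<forall>i. \<xi> (coeff p i) \<noteq> None)"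
definition reduce :: "'f poly \<Rightarrow> real poly" where "reduce p = map_poly residue p"

lemma xi_zero: "\<xi> 0 = Some 0" using place_on_zero[OF \<xi>_place is_subfield_UNIV] .
lemma xi_one: "\<xi> 1 = Some 1" using place_on_one[OF \<xi>_place] .
lemma residue_zero: "residue 0 = 0" by (simp add: residue_def xi_zero)
lemma residue_one: "residue 1 = 1" by (simp add: residue_def xi_one)

lemma xi_eq_residue: "\<xi> a \<noteq> None \<longleftrightarrow> \<xi> a = Some (residue a)"
  by (auto simp: residue_def)

lemma xi_add: "\<xi> a \<noteq> None \<Longrightarrow> \<xi> b \<noteq> None \<Longrightarrow> \<xi> (a + b) = Some (residue a + residue b)"
  using place_on_add[OF \<xi>_place, of a b "residue a" "residue b"] xi_eq_residue by auto
lemma xi_mult: "\<xi> a \<noteq> None \<Longrightarrow> \<xi> b \<noteq> None \<Longrightarrow> \<xi> (a * b) = Some (residue a * residue b)"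
  using place_on_mult[OF \<xi>_place, of a b "residue a" "residue b"] xi_eq_residue by auto
lemma residue_add: "\<xi> a \<noteq> None \<Longrightarrow> \<xi> b \<noteq> None \<Longrightarrow> residue (a + b) = residue a + residue b"
  using xi_add by (simp add: residue_def)
lemma residue_mult: "\<xi> a \<noteq> None \<Longrightarrow> \<xi> b \<noteq> None \<Longrightarrow> residue (a * b) = residue a * residue b"
  using xi_mult by (simp add: residue_def)

lemma xi_sum:
  "finite S \<Longrightarrow> \<forall>i\<in>S. \<xi> (g i) \<noteq> None \<Longrightarrow> \<xi> (sum g S) = Some (\<Sum>i\<in>S. residue (g i))"
proof (induction S rule: finite_induct)
  case empty then show ?case by (simp add: xi_zero)
next
  case (insert x F)
  then have "\<xi> (sum g F) \<noteq> None" by simp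
  then show ?case using insert xi_add[of "g x" "sum g F"] by (simp add: residue_def)
qed

lemma coeff_reduce: "coeff (reduce p) i = residue (coeff p i)"
  by (simp add: reduce_def coeff_map_poly residue_zero)

lemma xi_coeff_mult:
  assumes "integral_poly p" "integral_poly q"
  shows "\<xi> (coeff (p * q) n) = Some (coeff (reduce p * reduce q) n)"
proof -
  have "\<xi> (coeff p i * coeff q j) \<noteq> None" for i j
    using assms xi_mult by (simp add: integral_poly_def)
  then show ?thesis
    using assms by (simp add: coeff_mult coeff_reduce xi_sum residue_mult integral_poly_def)
qed

lemma integral_poly_0: "integral_poly 0" by (simp add: integral_poly_def xi_zero)
lemma integral_poly_1: "integral_poly 1" by (simp add: integral_poly_def coeff_1 xi_zero xi_one)
lemma integral_poly_add: "integral_poly p \<Longrightarrow> integral_poly q \<Longrightarrow> integral_poly (p + q)"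
  by (simp add: integral_poly_def xi_add)
lemma integral_poly_mult: "integral_poly p \<Longrightarrow> integral_poly q \<Longrightarrow> integral_poly (p * q)"
  by (simp add: integral_poly_def xi_coeff_mult)
lemma integral_poly_smult: "\<xi> c \<noteq> None \<Longrightarrow> integral_poly p \<Longrightarrow> integral_poly (smult c p)"
  by (simp add: integral_poly_def xi_mult)

lemma reduce_add: "integral_poly p \<Longrightarrow> integral_poly q \<Longrightarrow> reduce (p + q) = reduce p + reduce q"
  by (simp add: poly_eq_iff coeff_reduce integral_poly_def residue_add)
lemma reduce_mult: "integral_poly p \<Longrightarrow> integral_poly q \<Longrightarrow> reduce (p * q) = reduce p * reduce q"
  by (simp add: poly_eq_iff coeff_reduce residue_def xi_coeff_mult)
lemma reduce_smult: "\<xi> c \<noteq> None \<Longrightarrow> integral_poly p \<Longrightarrow> reduce (smult c p) = smult (residue c) (reduce p)"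
  by (simp add: poly_eq_iff coeff_reduce integral_poly_def residue_mult)
lemma reduce_1: "reduce 1 = 1" by (simp add: reduce_def residue_one)
lemma reduce_0: "reduce 0 = 0" by (simp add: reduce_def)

lemma exists_dominant_element:
  assumes "finite S" "S \<noteq> {}" "0 \<notin> S"
  shows "\<exists>m\<in>S. \<forall>s\<in>S. \<xi> (s / m) \<noteq> None"
  using assms
proof (induction S rule: finite_ne_induct)
  case (singleton x)
  then show ?case by (simp add: xi_one)
next
  case (insert x F)
  then obtain m where m: "m \<in> F" "\<forall>s\<in>F. \<xi> (s / m) \<noteq> None" by auto
  have x0: "x \<noteq> 0" and m0: "m \<noteq> 0" using insert m by auto
  show ?case
  proof (cases "\<xi> (x / m) = None")
    case False
    then show ?thesis using m by auto
  next
    case True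
    have "\<xi> (inverse (x / m)) = Some 0"
      using place_on_inverse_of_None[OF \<xi>_place _ _ True] x0 m0 by simp
    then have mx: "\<xi> (m / x) = Some 0" by simp
    have "\<forall>s\<in>insert x F. \<xi> (s / x) \<noteq> None"
    proof
      fix s assume "s \<in> insert x F"
      then consider "s = x" | "s \<in> F" by auto
      then show "\<xi> (s / x) \<noteq> None"
      proof cases
        case 1 then show ?thesis using x0 by (simp add: xi_one)
      next
        case 2
        have e: "s / x = (s / m) * (m / x)" using m0 by simp
        have "\<xi> ((s / m) * (m / x)) = Some (residue (s / m) * residue (m / x))"
          using m(2) 2 mx by (intro xi_mult) auto
        then show ?thesis by (simp only: e) simp
      qed
    qed
    then show ?thesis by auto
  qed
qed

lemma poly_eq_smult_integral:
  assumes "p \<noteq> 0"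
  shows "\<exists>c P0. c \<noteq> 0 \<and> p = smult c P0 \<and> integral_poly P0 \<and> reduce P0 \<noteq> 0"
proof -
  define S where "S = {coeff p i | i. coeff p i \<noteq> 0}"
  have "S \<subseteq> (\<lambda>i. coeff p i) ` {..degree p}"
    unfolding S_def using le_degree by fastforce
  then have fin: "finite S" using finite_subset by blast
  have ne: "S \<noteq> {}" unfolding S_def
    using assms by (metis (mono_tags, lifting) empty_Collect_eq leading_coeff_0_iff)
  obtain m where m: "m \<in> S" "\<forall>s\<in>S. \<xi> (s / m) \<noteq> None"
    using exists_dominant_element[OF fin ne] S_def by auto
  obtain i0 where i0: "coeff p i0 = m" "m \<noteq> 0" using m(1) S_def by auto
  define P0 where "P0 = smult (inverse m) p"
  have "p = smult m P0" using i0 by (simp add: P0_def)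
  moreover have "integral_poly P0"
    unfolding integral_poly_def P0_def
  proof
    fix i
    show "\<xi> (coeff (smult (inverse m) p) i) \<noteq> None"
    proof (cases "coeff p i = 0")
      case True then show ?thesis by (simp add: xi_zero)
    next
      case False
      then have "coeff p i \<in> S" using S_def by auto
      then show ?thesis using m(2) by (simp add: field_simps)
    qed
  qed
  moreover have "reduce P0 \<noteq> 0"
  proof -
    have "coeff (reduce P0) i0 = 1" using i0 by (simp add: coeff_reduce P0_def residue_one)
    then show ?thesis by auto
  qed
  ultimately show ?thesis using i0 by blast
qed

text \<open>The Gauss extension is evaluated on a representative \<open>A / B\<close> with integral coefficients and
  \<open>reduce B \<noteq> 0\<close>. Dividing numerator and denominator by a coefficient of largest value produces
  such a representative for \<open>f\<close> or for \<open>inverse f\<close> (with numerator reducing to 0).\<close>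

definition integral_rep :: "'f poly fract \<Rightarrow> 'f poly \<Rightarrow> 'f poly \<Rightarrow> bool" where
  "integral_rep f A B \<longleftrightarrow> f = Fract A B \<and> integral_poly A \<and> integral_poly B \<and> reduce B \<noteq> 0"

definition gauss :: "'f poly fract \<Rightarrow> real poly fract option" where
  "gauss f = (if \<exists>A B. integral_rep f A B then
     Some (let AB = (SOME AB. integral_rep f (fst AB) (snd AB)) in Fract (reduce (fst AB)) (reduce (snd AB)))
   else None)"

lemma integral_rep_denom_nonzero: "integral_rep f A B \<Longrightarrow> B \<noteq> 0"
  by (auto simp: integral_rep_def reduce_0)

lemma integral_rep_reduce_eq:
  assumes "integral_rep f A B" "integral_rep f A' B'"
  shows "Fract (reduce A) (reduce B) = Fract (reduce A') (reduce B')"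
proof -
  have B: "B \<noteq> 0" "B' \<noteq> 0" using integral_rep_denom_nonzero assms by auto
  have "Fract A B = Fract A' B'" using assms by (simp add: integral_rep_def)
  then have "A * B' = A' * B" using B by (simp add: eq_fract)
  then have "reduce (A * B') = reduce (A' * B)" by simp
  then have "reduce A * reduce B' = reduce A' * reduce B"
    using assms by (simp add: integral_rep_def reduce_mult)
  then show ?thesis using assms by (simp add: integral_rep_def eq_fract)
qed

lemma gauss_eq:
  assumes "integral_rep f A B"
  shows "gauss f = Some (Fract (reduce A) (reduce B))"
proof -
  have ex: "\<exists>AB. integral_rep f (fst AB) (snd AB)" using assms by auto
  define AB where "AB = (SOME AB. integral_rep f (fst AB) (snd AB))"
  have g: "integral_rep f (fst AB) (snd AB)" using someI_ex[OF ex] unfolding AB_def .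
  have "gauss f = Some (Fract (reduce (fst AB)) (reduce (snd AB)))"
    unfolding gauss_def Let_def AB_def[symmetric] using assms by auto
  also have "\<dots> = Some (Fract (reduce A) (reduce B))"
    using integral_rep_reduce_eq[OF g assms] by simp
  finally show ?thesis .
qed

lemma gauss_None: "\<not> (\<exists>A B. integral_rep f A B) \<Longrightarrow> gauss f = None"
  by (simp add: gauss_def)

lemma integral_rep_cases:
  "(\<exists>A B. integral_rep f A B) \<or> (f \<noteq> 0 \<and> (\<exists>A B. integral_rep (inverse f) A B \<and> reduce A = 0))"
proof (cases f)
  case (Fract p q)
  show ?thesis
  proof (cases "p = 0")
    case True
    then have "integral_rep f 0 1"
      using Fract by (simp add: integral_rep_def integral_poly_0 integral_poly_1 reduce_1 eq_fract)
    then show ?thesis by blast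
  next
    case False
    obtain c P0 where c: "c \<noteq> 0" "p = smult c P0" "integral_poly P0" "reduce P0 \<noteq> 0"
      using poly_eq_smult_integral[OF False] by blast
    obtain d Q0 where d: "d \<noteq> 0" "q = smult d Q0" "integral_poly Q0" "reduce Q0 \<noteq> 0"
      using poly_eq_smult_integral[OF Fract(2)] by blast
    have P00: "P0 \<noteq> 0" "Q0 \<noteq> 0" using c d by (auto simp: reduce_0)
    show ?thesis
    proof (cases "\<xi> (c / d) = None")
      case False
      have "f = Fract (smult (c / d) P0) Q0"
        using Fract c d P00 by (simp add: eq_fract)
      then have "integral_rep f (smult (c / d) P0) Q0"
        using False c d by (simp add: integral_rep_def integral_poly_smult)
      then show ?thesis by blast
    next
      case True
      have "\<xi> (inverse (c / d)) = Some 0"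
        using place_on_inverse_of_None[OF \<xi>_place _ _ True] c d by simp
      then have dc: "\<xi> (d / c) = Some 0" by simp
      have "inverse f = Fract (smult (d / c) Q0) P0"
        using Fract c d P00 by (simp add: eq_fract)
      moreover have "reduce (smult (d / c) Q0) = 0"
        using dc d by (simp add: reduce_smult residue_def)
      moreover have "f \<noteq> 0" using Fract False by (simp add: eq_fract Zero_fract_def)
      ultimately show ?thesis using dc d c
        by (metis integral_poly_smult integral_rep_def option.distinct(1))
    qed
  qed
qed

lemma integral_rep_inverse_reduce_nonzero:
  assumes "f \<noteq> 0" "integral_rep f A B" "integral_rep (inverse f) A' B'"
  shows "reduce A' \<noteq> 0"
proof -
  have "B \<noteq> 0" "B' \<noteq> 0" using integral_rep_denom_nonzero assms by auto
  moreover have "Fract (A * A') (B * B') = 1"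
    using assms by (metis integral_rep_def mult_fract right_inverse)
  ultimately have "A * A' = B * B'" by (simp add: eq_fract One_fract_def)
  then have "reduce A * reduce A' = reduce B * reduce B'"
    using assms by (metis integral_rep_def reduce_mult)
  then show ?thesis using assms by (auto simp: integral_rep_def)
qed

lemma reduce_in: "integral_poly A \<Longrightarrow> coeff (reduce A) i \<in> residue_field \<xi>"
  unfolding coeff_reduce residue_field_def integral_poly_def using xi_eq_residue by blast

lemma gauss_Some: "gauss f = Some x \<Longrightarrow> \<exists>A B. integral_rep f A B \<and> x = Fract (reduce A) (reduce B)"
  by (metis gauss_None gauss_eq option.distinct(1) option.inject)

lemma integral_rep_add:
  assumes "integral_rep f A B" "integral_rep g C D"
  shows "integral_rep (f + g) (A * D + C * B) (B * D)"
  using assms integral_rep_denom_nonzero[OF assms(1)] integral_rep_denom_nonzero[OF assms(2)]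
  by (auto simp: integral_rep_def integral_poly_add integral_poly_mult reduce_mult)

lemma integral_rep_mult:
  assumes "integral_rep f A B" "integral_rep g C D"
  shows "integral_rep (f * g) (A * C) (B * D)"
  using assms
  by (auto simp: integral_rep_def integral_poly_mult reduce_mult)

lemma place_on_gauss: "place_on UNIV (ratfun (residue_field \<xi>)) gauss"
  unfolding place_on_def
proof (intro conjI ballI allI impI)
  fix a x assume "gauss a = Some x"
  then obtain A B where "integral_rep a A B" "x = Fract (reduce A) (reduce B)"
    using gauss_Some by blast
  then show "x \<in> ratfun (residue_field \<xi>)"
    unfolding ratfun_def integral_rep_def using reduce_in by blast
next
  have "integral_rep 1 1 1" by (simp add: integral_rep_def integral_poly_1 reduce_1 fract_collapse)
  then show "gauss 1 = Some 1" using gauss_eq by (simp add: reduce_1 fract_collapse)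
next
  fix a b x y assume h: "gauss a = Some x \<and> gauss b = Some y"
  then obtain A B C D where r: "integral_rep a A B" "x = Fract (reduce A) (reduce B)"
    "integral_rep b C D" "y = Fract (reduce C) (reduce D)" using gauss_Some by meson
  have B0: "reduce B \<noteq> 0" "reduce D \<noteq> 0" "B \<noteq> 0" "D \<noteq> 0"
    using r integral_rep_denom_nonzero by (auto simp: integral_rep_def)
  have O: "integral_poly A" "integral_poly B" "integral_poly C" "integral_poly D"
    using r by (auto simp: integral_rep_def)
  show "gauss (a + b) = Some (x + y)"
    using gauss_eq[OF integral_rep_add[OF r(1,3)]] r B0 O
    by (simp add: reduce_add reduce_mult integral_poly_mult)
  show "gauss (a * b) = Some (x * y)"
    using gauss_eq[OF integral_rep_mult[OF r(1,3)]] r B0 O by (simp add: reduce_mult)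
next
  fix a :: "'f poly fract" assume a0: "a \<noteq> 0"
  show "gauss a = None \<longleftrightarrow> gauss (inverse a) = Some 0"
  proof
    assume "gauss a = None"
    then have "\<not> (\<exists>A B. integral_rep a A B)" using gauss_eq by fastforce
    then obtain A B where "integral_rep (inverse a) A B" "reduce A = 0"
      using integral_rep_cases[of a] by blast
    then show "gauss (inverse a) = Some 0" using gauss_eq by (simp add: fract_collapse)
  next
    assume "gauss (inverse a) = Some 0"
    then obtain A B where r: "integral_rep (inverse a) A B" "0 = Fract (reduce A) (reduce B)"
      using gauss_Some by blast
    then have "reduce A = 0" by (auto simp: integral_rep_def eq_fract Zero_fract_def)
    then have "\<not> (\<exists>A' B'. integral_rep a A' B')"
      using integral_rep_inverse_reduce_nonzero[OF a0 _ r(1)] by blast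
    then show "gauss a = None" by (rule gauss_None)
  qed
qed

lemma reduce_conv_map_poly: "reduce p = map_poly (\<lambda>c. the (\<xi> c)) p"
  by (simp add: reduce_def residue_def[abs_def])

lemma gauss_Fract_integral: "(\<forall>i. \<xi> (coeff p i) \<noteq> None) \<Longrightarrow> gauss (Fract p 1) = Some (Fract (reduce p) 1)"
  using gauss_eq[of "Fract p 1" p 1]
  by (simp add: integral_rep_def integral_poly_def integral_poly_1 reduce_1 coeff_1 xi_zero xi_one)

lemma place_on_eq_gauss:
  assumes P: "place_on UNIV (ratfun (residue_field \<xi>)) P"
    and P_poly: "\<And>p. integral_poly p \<Longrightarrow> P (Fract p 1) = Some (Fract (reduce p) 1)"
  shows "P = gauss"
proof
  have P_rep: "P f = Some (Fract (reduce A) (reduce B))" if g: "integral_rep f A B" for f A B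
  proof -
    have O: "integral_poly A" "integral_poly B" "reduce B \<noteq> 0" "B \<noteq> 0"
      using g integral_rep_denom_nonzero by (auto simp: integral_rep_def)
    have "Fract (reduce B) 1 \<noteq> 0" using O by (simp add: eq_fract Zero_fract_def)
    then have "P (inverse (Fract B 1)) = Some (inverse (Fract (reduce B) 1))"
      using place_on_inverse[OF P is_subfield_UNIV _ P_poly[OF O(2)]] by simp
    then have "P (Fract A 1 * inverse (Fract B 1)) = Some (Fract (reduce A) 1 * inverse (Fract (reduce B) 1))"
      by (intro place_on_mult[OF P _ _ P_poly[OF O(1)]]) auto
    then show ?thesis using g by (simp add: integral_rep_def)
  qed
  fix f
  show "P f = gauss f"
  proof (cases "\<exists>A B. integral_rep f A B")
    case True
    then obtain A B where "integral_rep f A B" by blast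
    then show ?thesis using P_rep gauss_eq by simp
  next
    case False
    then obtain A B where r: "f \<noteq> 0" "integral_rep (inverse f) A B" "reduce A = 0"
      using integral_rep_cases[of f] by blast
    have "P (inverse f) = Some 0" using P_rep[OF r(2)] r(3) by (simp add: fract_collapse)
    then show ?thesis using place_on_None_iff[OF P _ r(1)] gauss_None[OF False] by simp
  qed
qed

lemma gauss_ext_eq_gauss: "gauss_ext \<xi> = gauss"
  unfolding gauss_ext_def
proof (rule the_equality)
  show "place_on UNIV (ratfun (residue_field \<xi>)) gauss \<and>
    (\<forall>p. (\<forall>i. \<xi> (coeff p i) \<noteq> None) \<longrightarrow> gauss (Fract p 1) = Some (Fract (map_poly (\<lambda>c. the (\<xi> c)) p) 1))"
    using place_on_gauss gauss_Fract_integral by (simp add: reduce_conv_map_poly)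
next
  fix P assume "place_on UNIV (ratfun (residue_field \<xi>)) P \<and>
    (\<forall>p. (\<forall>i. \<xi> (coeff p i) \<noteq> None) \<longrightarrow> P (Fract p 1) = Some (Fract (map_poly (\<lambda>c. the (\<xi> c)) p) 1))"
  then show "P = gauss"
    by (intro place_on_eq_gauss) (simp_all add: reduce_conv_map_poly integral_poly_def)
qed

end

definition poly_over :: "'a::field set \<Rightarrow> 'a poly \<Rightarrow> bool" where
  "poly_over S p \<longleftrightarrow> (\<forall>i. coeff p i \<in> S)"

context
  fixes S :: "'a::field set"
  assumes S: "is_subfield S"
begin

lemma poly_over_0: "poly_over S 0"
  using S by (simp add: poly_over_def is_subfieldD)
lemma poly_over_1: "poly_over S 1"
  using S by (simp add: poly_over_def coeff_1 is_subfieldD)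
lemma poly_over_pCons_iff: "poly_over S (pCons c p) \<longleftrightarrow> c \<in> S \<and> poly_over S p"
  unfolding poly_over_def by (metis coeff_pCons_0 coeff_pCons_Suc not0_implies_Suc)
lemma poly_over_const: "c \<in> S \<Longrightarrow> poly_over S [:c:]"
  by (simp add: poly_over_pCons_iff poly_over_0)
lemma poly_over_linear: "a \<in> S \<Longrightarrow> b \<in> S \<Longrightarrow> poly_over S [:a, b:]"
  by (simp add: poly_over_pCons_iff poly_over_0)
lemma poly_over_add: "poly_over S p \<Longrightarrow> poly_over S q \<Longrightarrow> poly_over S (p + q)"
  using S by (simp add: poly_over_def is_subfieldD)
lemma poly_over_diff: "poly_over S p \<Longrightarrow> poly_over S q \<Longrightarrow> poly_over S (p - q)"
  using S by (simp add: poly_over_def is_subfield_diff)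
lemma poly_over_uminus: "poly_over S p \<Longrightarrow> poly_over S (- p)"
  using S by (simp add: poly_over_def is_subfieldD)
lemma poly_over_mult: "poly_over S p \<Longrightarrow> poly_over S q \<Longrightarrow> poly_over S (p * q)"
  unfolding poly_over_def coeff_mult by (auto intro!: is_subfield_sum[OF S] is_subfieldD(4)[OF S])
lemma poly_over_monom: "c \<in> S \<Longrightarrow> poly_over S (monom c n)"
  using S by (simp add: poly_over_def coeff_monom is_subfieldD)

lemma poly_over_division:
  assumes q: "poly_over S q" "q \<noteq> 0"
  shows "poly_over S p \<Longrightarrow> \<exists>s r. poly_over S s \<and> poly_over S r \<and> p = s * q + r \<and> (r = 0 \<or> degree r < degree q)"
proof (induction "degree p" arbitrary: p rule: less_induct)
  case less
  show ?case
  proof (cases "p = 0 \<or> degree p < degree q")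
    case True
    then show ?thesis using less.prems poly_over_0 by (intro exI[of _ 0] exI[of _ p]) auto
  next
    case False
    then have p0: "p \<noteq> 0" and dd: "degree q \<le> degree p" by auto
    define t where "t = monom (lead_coeff p / lead_coeff q) (degree p - degree q)"
    have "lead_coeff p / lead_coeff q \<in> S"
      using is_subfield_divide[OF S] less.prems q(1) unfolding poly_over_def by blast
    then have t: "poly_over S t" "t \<noteq> 0"
      using poly_over_monom p0 q(2) by (simp_all add: t_def)
    have "degree t = degree p - degree q" using t(2) by (simp add: t_def degree_monom_eq)
    then have dtq: "degree (t * q) = degree p" using degree_mult_eq[OF t(2) q(2)] dd by simp
    have ltq: "lead_coeff (t * q) = lead_coeff p" using q(2)
      unfolding lead_coeff_mult t_def lead_coeff_monom by simp
    define p' where "p' = p - t * q"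
    have p': "poly_over S p'" unfolding p'_def
      using poly_over_diff[OF less.prems poly_over_mult[OF t(1) q(1)]] .
    have "p' = 0 \<or> degree p' < degree p"
    proof (cases "p' = 0")
      case False
      have "degree p' \<le> degree p" unfolding p'_def using dtq by (intro degree_diff_le) auto
      moreover have "coeff p' (degree p) = 0" unfolding p'_def using dtq ltq by simp
      ultimately show ?thesis using degree_less_if_less_eqI[of p' p] False by simp
    qed simp
    then obtain s r where sr: "poly_over S s" "poly_over S r" "p' = s * q + r" "r = 0 \<or> degree r < degree q"
    proof (cases "p' = 0")
      case True
      then show thesis using that[of 0 0] poly_over_0 by simp
    qed (use less.hyps[of p'] p' in blast)
    have "p = (s + t) * q + r" using sr(3) by (simp add: p'_def algebra_simps)
    then show ?thesis using sr poly_over_add[OF sr(1) t(1)] by blast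
  qed
qed

end

lemma Fract_in_ratfun: "poly_over S p \<Longrightarrow> poly_over S q \<Longrightarrow> q \<noteq> 0 \<Longrightarrow> Fract p q \<in> ratfun S"
  unfolding ratfun_def poly_over_def by blast

lemma ratfun_cases:
  assumes "f \<in> ratfun S"
  obtains p q where "f = Fract p q" "q \<noteq> 0" "poly_over S p" "poly_over S q"
  using assms unfolding ratfun_def poly_over_def by blast

context
  fixes S :: "real set"
  assumes S: "is_subfield S"
begin

lemma is_subfield_ratfun: "is_subfield (ratfun S)"
proof -
  have "0 \<in> ratfun S" "1 \<in> ratfun S"
    using Fract_in_ratfun[OF poly_over_0[OF S] poly_over_1[OF S]] Fract_in_ratfun[OF poly_over_1[OF S] poly_over_1[OF S]]
    by (auto simp: fract_collapse)
  moreover have "f + g \<in> ratfun S \<and> f * g \<in> ratfun S" if "f \<in> ratfun S" "g \<in> ratfun S" for f g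
    using that
    by (elim ratfun_cases) (auto intro!: Fract_in_ratfun poly_over_add[OF S] poly_over_mult[OF S])
  moreover have "- f \<in> ratfun S" if "f \<in> ratfun S" for f
    using that by (elim ratfun_cases) (auto intro!: Fract_in_ratfun poly_over_uminus[OF S])
  moreover have "inverse f \<in> ratfun S" if "f \<in> ratfun S" for f
  proof (cases "f = 0")
    case False
    with that show ?thesis
      by (elim ratfun_cases) (auto simp: fract_collapse intro!: Fract_in_ratfun)
  qed (use \<open>0 \<in> ratfun S\<close> in simp)
  ultimately show ?thesis unfolding is_subfield_def by blast
qed

lemma poly_in_ratfun: "poly_over S p \<Longrightarrow> Fract p 1 \<in> ratfun S"
  by (simp add: Fract_in_ratfun poly_over_1[OF S])

lemma cst_in_ratfun: "c \<in> S \<Longrightarrow> cst c \<in> ratfun S"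
  unfolding cst_def by (simp add: poly_in_ratfun poly_over_const[OF S])

lemma yvar_in_ratfun: "yvar \<in> ratfun S"
  unfolding yvar_def
    using is_subfieldD(1,2)[OF S] by (simp add: poly_in_ratfun poly_over_linear[OF S])

end

lemma yvar_nonzero [simp]: "yvar \<noteq> (0 :: 'a::field poly fract)"
  by (simp add: yvar_def eq_fract Zero_fract_def)

lemma Fract_pCons: "Fract (pCons c p) 1 = cst c + yvar * Fract p 1"
  by (simp add: cst_def yvar_def mult_pCons_left)

lemma Fract_monom: "Fract (monom c n) 1 = cst c * yvar ^ n"
proof -
  have "Fract (q ^ k) 1 = Fract q 1 ^ k" for q :: "'a::field poly" and k
  proof (induction k)
    case (Suc k)
    have "Fract (q ^ Suc k) 1 = Fract q 1 * Fract (q ^ k) 1" by simp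
    then show ?case using Suc by simp
  qed (simp add: fract_collapse)
  moreover have "Fract (monom c n) 1 = Fract [:c:] 1 * Fract ([:0, 1:] ^ n) 1"
    by (simp add: monom_altdef)
  ultimately show ?thesis by (simp only: cst_def yvar_def)
qed

locale ratfun_place =
  fixes S :: "real set" and Q :: "real poly fract \<Rightarrow> real option"
  assumes S: "is_subfield S" and Q_place: "place_on (ratfun S) UNIV Q"
    and Q_cst: "\<forall>c\<in>S. Q (cst c) = Some c"
begin

lemma ratfun_S: "is_subfield (ratfun S)"
  using is_subfield_ratfun[OF S] .

lemma value_poly:
  assumes a: "Q yvar = Some a"
  shows "poly_over S p \<Longrightarrow> Q (Fract p 1) = Some (poly p a)"
proof (induction p rule: pCons_induct)
  case 0
  then show ?case using place_on_zero[OF Q_place ratfun_S] by (simp add: fract_collapse)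
next
  case (pCons c p)
  have cp: "c \<in> S" "poly_over S p" using pCons.prems by (simp_all add: poly_over_pCons_iff[OF S])
  have "Q (yvar * Fract p 1) = Some (a * poly p a)"
    using place_on_mult[OF Q_place yvar_in_ratfun[OF S] poly_in_ratfun[OF S cp(2)] a pCons.IH[OF cp(2)]] .
  then have "Q (cst c + yvar * Fract p 1) = Some (c + a * poly p a)"
    using place_on_add[OF Q_place cst_in_ratfun[OF S cp(1)]] is_subfieldD(4)[OF ratfun_S] Q_cst cp(1)
      yvar_in_ratfun[OF S] poly_in_ratfun[OF S cp(2)]
    by simp
  then show ?case by (simp add: Fract_pCons)
qed

lemma value_Fract:
  assumes a: "Q yvar = Some a" and pq: "poly_over S p" "poly_over S q" "poly q a \<noteq> 0"
  shows "Q (Fract p q) = Some (poly p a / poly q a)"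
proof -
  have "Q (inverse (Fract q 1)) = Some (inverse (poly q a))"
    using place_on_inverse[OF Q_place ratfun_S poly_in_ratfun[OF S pq(2)] value_poly[OF a pq(2)] pq(3)] .
  then have "Q (Fract p 1 * inverse (Fract q 1)) = Some (poly p a * inverse (poly q a))"
    using place_on_mult[OF Q_place poly_in_ratfun[OF S pq(1)] _ value_poly[OF a pq(1)]]
      is_subfieldD(6)[OF ratfun_S poly_in_ratfun[OF S pq(2)]] by blast
  then show ?thesis by (simp add: divide_inverse)
qed

lemma value_Fract_pole:
  assumes a: "Q yvar = Some a" and pq: "poly_over S p" "poly_over S q" "q \<noteq> 0"
    and "poly q a = 0" "poly p a \<noteq> 0"
  shows "Q (Fract p q) = None"
proof -
  have "Q (inverse (Fract q 1)) = None"
    using place_on_inverse_of_zero[OF Q_place ratfun_S poly_in_ratfun[OF S pq(2)]] value_poly[OF a pq(2)]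
      assms(4,5) by (simp add: eq_fract Zero_fract_def)
  then have "Q (inverse (Fract q 1) * Fract p 1) = None"
    using place_on_mult_None[OF Q_place ratfun_S _ poly_in_ratfun[OF S pq(1)] _ value_poly[OF a pq(1)]]
      is_subfieldD(6)[OF ratfun_S poly_in_ratfun[OF S pq(2)]] assms(6) by blast
  then show ?thesis by (simp add: mult.commute)
qed

context
  assumes infinite: "Q yvar = None"
begin

lemma inverse_yvar_power_in_ratfun: "inverse yvar ^ k \<in> ratfun S"
  using is_subfield_power[OF ratfun_S is_subfieldD(6)[OF ratfun_S yvar_in_ratfun[OF S]]] .

lemma value_inverse_yvar_power: "Q (inverse yvar ^ k) = Some (0 ^ k)"
proof (induction k)
  case 0
  then show ?case using place_on_one[OF Q_place] by simp
next
  case (Suc k)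
  have "Q (inverse yvar) = Some 0"
    using place_on_inverse_of_None[OF Q_place yvar_in_ratfun[OF S] yvar_nonzero infinite] .
  then show ?case
    using place_on_mult[OF Q_place _ inverse_yvar_power_in_ratfun _ Suc]
      is_subfieldD(6)[OF ratfun_S yvar_in_ratfun[OF S]] by simp
qed

lemma value_leading_term:
  "poly_over S p \<Longrightarrow> Q (Fract p 1 * inverse yvar ^ degree p) = Some (lead_coeff p)"
proof (induction "degree p" arbitrary: p rule: less_induct)
  case less
  show ?case
  proof (cases "degree p = 0")
    case True
    then have "Fract p 1 = cst (coeff p 0)" by (metis cst_def degree_0_id)
    then show ?thesis using True Q_cst less.prems by (simp add: poly_over_def)
  next
    case False
    define n where "n = degree p"
    define c where "c = lead_coeff p"
    define q where "q = p - monom c n"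
    have cS: "c \<in> S" using less.prems by (simp add: c_def poly_over_def)
    have qS: "poly_over S q" unfolding q_def
      using poly_over_diff[OF S less.prems poly_over_monom[OF S cS]] .
    have q_deg: "q = 0 \<or> degree q < n"
    proof (cases "q = 0")
      case False
      have "degree q \<le> n" unfolding q_def n_def
        by (intro degree_diff_le) (auto simp: degree_monom_le)
      moreover have "coeff q n = 0" by (simp add: q_def n_def c_def)
      ultimately show ?thesis using degree_less_if_less_eqI[of q p] False n_def by simp
    qed simp
    have q_in: "Fract q 1 * inverse yvar ^ n \<in> ratfun S"
      using is_subfieldD(4)[OF ratfun_S poly_in_ratfun[OF S qS] inverse_yvar_power_in_ratfun] .
    have p_split: "Fract p 1 = Fract (monom c n) 1 + Fract q 1" by (simp add: q_def)
    have monom_term: "Fract (monom c n) 1 * inverse yvar ^ n = cst c"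
      using yvar_nonzero
      by (simp add: Fract_monom mult.assoc right_inverse flip: power_mult_distrib)
    have "Fract p 1 * inverse yvar ^ n = cst c + Fract q 1 * inverse yvar ^ n"
      by (simp only: p_split distrib_right monom_term)
    moreover have "Q (Fract q 1 * inverse yvar ^ n) = Some 0"
    proof (cases "q = 0")
      case True
      then show ?thesis using place_on_zero[OF Q_place ratfun_S] by (simp add: fract_collapse)
    next
      case False
      then have dq: "degree q < n" using q_deg by simp
      have "inverse yvar ^ n = inverse yvar ^ degree q * inverse yvar ^ (n - degree q)"
        using dq by (simp flip: power_add)
      then have "Q (Fract q 1 * inverse yvar ^ n)
          = Q ((Fract q 1 * inverse yvar ^ degree q) * inverse yvar ^ (n - degree q))"
        by (metis mult.assoc)
      also have "\<dots> = Some (lead_coeff q * 0 ^ (n - degree q))"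
        using less.hyps[OF _ qS] dq n_def value_inverse_yvar_power inverse_yvar_power_in_ratfun
          is_subfieldD(4)[OF ratfun_S poly_in_ratfun[OF S qS] inverse_yvar_power_in_ratfun]
        by (intro place_on_mult[OF Q_place]) auto
      finally show ?thesis using dq by simp
    qed
    ultimately show ?thesis
      using place_on_add[OF Q_place cst_in_ratfun[OF S cS] q_in] Q_cst cS by (simp add: n_def c_def)
  qed
qed

lemma value_at_infinity:
  assumes p: "poly_over S p" and q: "poly_over S q" "q \<noteq> 0"
  shows "Q (Fract p q) =
    (if degree p < degree q then Some 0
     else if degree p = degree q then Some (lead_coeff p / lead_coeff q) else None)"
proof (cases "p = 0")
  case True
  then show ?thesis using place_on_zero[OF Q_place ratfun_S] by (simp add: fract_collapse)
next
  case False
  define A where "A = Fract p 1 * inverse yvar ^ degree p"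
  define B where "B = Fract q 1 * inverse yvar ^ degree q"
  have AB: "A \<in> ratfun S" "B \<in> ratfun S"
    unfolding A_def B_def using poly_in_ratfun[OF S p] poly_in_ratfun[OF S q(1)]
      inverse_yvar_power_in_ratfun is_subfieldD(4)[OF ratfun_S] by auto
  have lead: "lead_coeff q \<noteq> 0" "lead_coeff p \<noteq> 0" using q False by auto
  have "Q (inverse B) = Some (inverse (lead_coeff q))"
    using place_on_inverse[OF Q_place ratfun_S AB(2)] value_leading_term[OF q(1)] lead B_def by simp
  then have QAB: "Q (A * inverse B) = Some (lead_coeff p / lead_coeff q)"
    using place_on_mult[OF Q_place AB(1) is_subfieldD(6)[OF ratfun_S AB(2)] value_leading_term[OF p, folded A_def]]
    by (simp add: divide_inverse)
  have AB_in: "A * inverse B \<in> ratfun S" using is_subfieldD(4,6)[OF ratfun_S] AB by blast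
  show ?thesis
  proof (cases "degree p \<le> degree q")
    case True
    define k where "k = degree q - degree p"
    have "A * inverse B * inverse yvar ^ k = Fract p 1 / Fract q 1"
      unfolding A_def B_def using True yvar_nonzero q(2)
      by (simp add: k_def field_simps power_inverse flip: power_add del: divide_fract mult_fract)
    then have "Fract p q = A * inverse B * inverse yvar ^ k" by simp
    moreover have "Q (A * inverse B * inverse yvar ^ k) = Some (lead_coeff p / lead_coeff q * 0 ^ k)"
      by (rule place_on_mult[OF Q_place AB_in inverse_yvar_power_in_ratfun QAB value_inverse_yvar_power])
    ultimately show ?thesis using True k_def by simp
  next
    case False
    define k where "k = degree p - degree q"
    have "inverse (inverse yvar ^ k) * (A * inverse B) = Fract p 1 / Fract q 1"
      unfolding A_def B_def using False yvar_nonzero q(2)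
      by (simp add: k_def field_simps power_inverse flip: power_add del: divide_fract mult_fract)
    then have "Fract p q = inverse (inverse yvar ^ k) * (A * inverse B)" by simp
    moreover have "Q (inverse (inverse yvar ^ k)) = None"
      using place_on_inverse_of_zero[OF Q_place ratfun_S inverse_yvar_power_in_ratfun]
        value_inverse_yvar_power[of k] False yvar_nonzero by (simp add: k_def)
    ultimately show ?thesis
      using place_on_mult_None[OF Q_place ratfun_S _ AB_in _ QAB] lead False
        is_subfieldD(6)[OF ratfun_S inverse_yvar_power_in_ratfun] by simp
  qed
qed

end

end

lemma ratfun_place_unique:
  assumes Q1: "ratfun_place S Q1" and Q2: "ratfun_place S Q2" and y: "Q1 yvar = Q2 yvar"
    and f: "f \<in> ratfun S"
  shows "Q1 f = Q2 f"
proof -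
  interpret Q1: ratfun_place S Q1 by (rule Q1)
  interpret Q2: ratfun_place S Q2 by (rule Q2)
  obtain p q where pq: "f = Fract p q" "q \<noteq> 0" "poly_over S p" "poly_over S q"
    using f by (rule ratfun_cases)
  show ?thesis
  proof (cases "Q1 yvar")
    case None
    then show ?thesis
      using Q1.value_at_infinity[OF None pq(3,4,2)] Q2.value_at_infinity[OF _ pq(3,4,2)] y pq(1)
      by simp
  next
    case (Some a)
    have "Q1 (Fract p q) = Q2 (Fract p q)" if "poly_over S q" "q \<noteq> 0" "poly_over S p" for p q
      using that
    proof (induction "degree q" arbitrary: p q rule: less_induct)
      case less
      obtain s r where sr: "poly_over S s" "poly_over S r" "p = s * q + r" "r = 0 \<or> degree r < degree q"
        using poly_over_division[OF Q1.S less.prems(1,2,3)] by blast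
      have split: "Fract p q = Fract s 1 + Fract r q" using less.prems(2) sr(3) by simp
      have s: "Q1 (Fract s 1) = Some (poly s a)" "Q2 (Fract s 1) = Some (poly s a)"
        using Q1.value_poly[OF Some sr(1)] Q2.value_poly[OF _ sr(1)] Some y by auto
      have "Q1 (Fract r q) = Q2 (Fract r q)"
      proof (cases "r = 0")
        case True
        then show ?thesis
          using place_on_zero[OF Q1.Q_place Q1.ratfun_S] place_on_zero[OF Q2.Q_place Q1.ratfun_S]
          by (simp add: fract_collapse)
      next
        case False
        then have "Q1 (Fract q r) = Q2 (Fract q r)" using less sr by blast
        moreover have "Fract q r \<in> ratfun S" "Fract q r \<noteq> 0"
          using Fract_in_ratfun[OF less.prems(1) sr(2) False] False less.prems(2)
          by (simp_all add: eq_fract Zero_fract_def)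
        ultimately show ?thesis
          using place_on_inverse_cong[OF Q1.Q_place Q2.Q_place Q1.ratfun_S] by fastforce
      qed
      then show ?case
        unfolding split using place_on_add_cong[OF Q1.Q_place Q2.Q_place Q1.ratfun_S _ _ s]
          poly_in_ratfun[OF Q1.S sr(1)] Fract_in_ratfun[OF sr(2) less.prems(1,2)] by blast
    qed
    then show ?thesis using pq by simp
  qed
qed

lemma poly_order_decomp:
  fixes p :: "real poly"
  assumes "p \<noteq> 0"
  obtains p1 where "poly p1 a \<noteq> 0" "\<And>t. poly p t = (t - a) ^ order a p * poly p1 t"
proof -
  obtain p1 where p1: "p = [:- a, 1:] ^ order a p * p1" "\<not> [:- a, 1:] dvd p1"
    using order_decomp[OF assms] by blast
  have "poly [:- a, 1:] t = t - a" for t by simp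
  then show thesis
    using that[of p1] p1 by (metis poly_eq_0_iff_dvd poly_mult poly_power)
qed

lemma poly_quotient_limit_or_infinity:
  fixes p q :: "real poly"
  assumes p: "p \<noteq> 0" and q: "q \<noteq> 0"
  shows "(\<exists>L. ((\<lambda>t. poly p t / poly q t) \<longlongrightarrow> L) (at a)) \<or>
         filterlim (\<lambda>t. poly p t / poly q t) at_infinity (at a)"
proof -
  define k where "k = order a p"
  define m where "m = order a q"
  obtain p1 where p1a: "poly p1 a \<noteq> 0" and pt: "\<And>t. poly p t = (t - a) ^ k * poly p1 t"
    using poly_order_decomp[OF p] k_def by metis
  obtain q1 where q1a: "poly q1 a \<noteq> 0" and qt: "\<And>t. poly q t = (t - a) ^ m * poly q1 t"
    using poly_order_decomp[OF q] m_def by metis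
  have ev: "eventually (\<lambda>t. t \<noteq> a) (at a)" by (simp add: eventually_at_filter)
  show ?thesis
  proof (cases "m \<le> k")
    case True
    define j where "j = k - m"
    have kj: "k = m + j" using True j_def by simp
    have lim: "((\<lambda>t. (t - a) ^ j * poly p1 t / poly q1 t) \<longlongrightarrow> (a - a) ^ j * poly p1 a / poly q1 a)
        (at a)"
      using q1a by (intro tendsto_intros isCont_tendsto_compose[OF poly_isCont] tendsto_ident_at) auto
    have "eventually (\<lambda>t. (t - a) ^ j * poly p1 t / poly q1 t = poly p t / poly q t) (at a)"
      using ev by eventually_elim (simp add: pt qt kj power_add)
    then have "((\<lambda>t. poly p t / poly q t) \<longlongrightarrow> (a - a) ^ j * poly p1 a / poly q1 a) (at a)"
      by (rule Lim_transform_eventually[OF lim])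
    then show ?thesis by blast
  next
    case False
    define j where "j = m - k"
    have mj: "m = k + j" "j > 0" using False j_def by auto
    have num: "((\<lambda>t. poly p1 t) \<longlongrightarrow> poly p1 a) (at a)"
      by (intro isCont_tendsto_compose[OF poly_isCont] tendsto_ident_at)
    have den0: "((\<lambda>t. (t - a) ^ j * poly q1 t) \<longlongrightarrow> (a - a) ^ j * poly q1 a) (at a)"
      by (intro tendsto_intros isCont_tendsto_compose[OF poly_isCont] tendsto_ident_at)
    have evq: "eventually (\<lambda>t. poly q1 t \<noteq> 0) (at a)"
      using isCont_tendsto_compose[OF poly_isCont tendsto_ident_at, of q1 a] q1a
      by (metis tendsto_imp_eventually_ne)
    have den: "filterlim (\<lambda>t. (t - a) ^ j * poly q1 t) (at 0) (at a)"
    proof (rule filterlim_atI)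
      show "((\<lambda>t. (t - a) ^ j * poly q1 t) \<longlongrightarrow> 0) (at a)" using den0 mj(2) by (simp add: power_0_left)
      show "eventually (\<lambda>t. (t - a) ^ j * poly q1 t \<noteq> 0) (at a)"
        using ev evq by eventually_elim simp
    qed
    have inf: "filterlim (\<lambda>t. poly p1 t / ((t - a) ^ j * poly q1 t)) at_infinity (at a)"
      by (rule filterlim_divide_at_infinity[OF num den p1a])
    have "eventually (\<lambda>t. poly p1 t / ((t - a) ^ j * poly q1 t) = poly p t / poly q t) (at a)"
      using ev by eventually_elim (simp add: pt qt mj power_add)
    then have "filterlim (\<lambda>t. poly p t / poly q t) at_infinity (at a)"
      by (rule iffD1[OF filterlim_cong[OF refl refl] inf])
    then show ?thesis by blast
  qed
qed

lemma poly_quotient_inverse_limit_or_infinity: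
  fixes p q :: "real poly"
  assumes p: "p \<noteq> 0" and q: "q \<noteq> 0"
  shows "(\<exists>L. ((\<lambda>t. poly p (inverse t) / poly q (inverse t)) \<longlongrightarrow> L) (at 0)) \<or>
         filterlim (\<lambda>t. poly p (inverse t) / poly q (inverse t)) at_infinity (at 0)"
proof -
  define P' where "P' = reflect_poly p * [:0, 1:] ^ degree q"
  define Q' where "Q' = reflect_poly q * [:0, 1:] ^ degree p"
  have nz: "P' \<noteq> 0" "Q' \<noteq> 0" using p q by (auto simp: P'_def Q'_def)
  have ev: "eventually (\<lambda>t. t \<noteq> 0) (at (0::real))" by (simp add: eventually_at_filter)
  have eq: "eventually (\<lambda>t. poly P' t / poly Q' t = poly p (inverse t) / poly q (inverse t)) (at 0)"
    using ev
  proof eventually_elim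
    case (elim t)
    have a: "poly p (inverse t) = poly (reflect_poly p) t / t ^ degree p"
      using poly_reflect_poly_nz[OF elim, of p] elim by (simp add: field_simps)
    have b: "poly q (inverse t) = poly (reflect_poly q) t / t ^ degree q"
      using poly_reflect_poly_nz[OF elim, of q] elim by (simp add: field_simps)
    have aux: "x * v / (y * u) = (x / u) / (y / v)" if "u \<noteq> 0" "v \<noteq> 0" for x y u v :: real
      using that by (cases "y = 0") (simp_all add: field_simps)
    have "t ^ degree p \<noteq> 0" "t ^ degree q \<noteq> 0" using elim by auto
    then show ?case unfolding a b P'_def Q'_def poly_mult poly_power using aux by simp
  qed
  then show ?thesis
    using poly_quotient_limit_or_infinity[OF nz, of 0] tendsto_cong[OF eq] filterlim_cong[OF refl refl eq]
    by metis
qed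

definition fract_eval :: "real poly fract \<Rightarrow> real \<Rightarrow> real" where
  "fract_eval f t =
    (let pq = (SOME pq. f = Fract (fst pq) (snd pq) \<and> snd pq \<noteq> 0) in poly (fst pq) t / poly (snd pq) t)"

text \<open>The place of \<open>\<real>(y)\<close> sending \<open>f\<close> to the limit of \<open>f(h(t))\<close> for \<open>t \<rightarrow> a\<close> (\<open>None\<close> if there is
  none): \<open>h = id\<close> gives the place \<open>y \<mapsto> a\<close>, and \<open>h = inverse\<close>, \<open>a = 0\<close> the place \<open>y \<mapsto> \<infinity>\<close>.
  The poles of \<open>f\<close> are finitely many, so \<open>fract_eval\<close> is a field homomorphism eventually.\<close>

locale limit_place =
  fixes h :: "real \<Rightarrow> real" and a :: real
  assumes inj: "inj h"
    and limit_or_infinity: "\<And>p q. p \<noteq> 0 \<Longrightarrow> q \<noteq> 0 \<Longrightarrow>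
      (\<exists>L. ((\<lambda>t. poly p (h t) / poly q (h t)) \<longlongrightarrow> L) (at a)) \<or>
      filterlim (\<lambda>t. poly p (h t) / poly q (h t)) at_infinity (at a)"
begin

lemma eventually_poly_nonzero:
  assumes "r \<noteq> 0"
  shows "eventually (\<lambda>t. poly r (h t) \<noteq> 0) (at a)"
proof -
  have "finite (h -` {x. poly r x = 0})" using finite_vimageI[OF poly_roots_finite[OF assms] inj] .
  then have "\<not> a islimpt (h -` {x. poly r x = 0})" by (rule islimpt_finite)
  then show ?thesis by (simp add: islimpt_iff_eventually)
qed

lemma eventually_fract_eval:
  assumes q: "q \<noteq> 0"
  shows "eventually (\<lambda>t. fract_eval (Fract p q) (h t) = poly p (h t) / poly q (h t) \<and> poly q (h t) \<noteq> 0) (at a)"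
proof -
  define pq where "pq = (SOME pq. Fract p q = Fract (fst pq) (snd pq) \<and> snd pq \<noteq> 0)"
  have "\<exists>pq. Fract p q = Fract (fst pq) (snd pq) \<and> snd pq \<noteq> 0" using q by auto
  then have pq: "Fract p q = Fract (fst pq) (snd pq)" "snd pq \<noteq> 0"
    unfolding pq_def by (metis (mono_tags, lifting) someI_ex)+
  then have cross: "poly p x * poly (snd pq) x = poly (fst pq) x * poly q x" for x
    using q by (simp add: eq_fract flip: poly_mult)
  have eval: "fract_eval (Fract p q) t = poly (fst pq) t / poly (snd pq) t" for t
    unfolding fract_eval_def pq_def Let_def by simp
  show ?thesis using eventually_poly_nonzero[OF q] eventually_poly_nonzero[OF pq(2)]
    by eventually_elim (simp add: eval cross field_simps)
qed

lemma eventually_fract_eval_add: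
  "eventually (\<lambda>t. fract_eval (f + g) (h t) = fract_eval f (h t) + fract_eval g (h t)) (at a)"
proof -
  obtain p q r s where fg: "f = Fract p q" "q \<noteq> 0" "g = Fract r s" "s \<noteq> 0"
    by (metis Fract_cases)
  have qs: "q * s \<noteq> 0" using fg by simp
  show ?thesis
    using eventually_fract_eval[OF fg(2), of p] eventually_fract_eval[OF fg(4), of r]
      eventually_fract_eval[OF qs, of "p * s + r * q"]
    unfolding fg(1,3) by eventually_elim (simp add: fg(2,4) field_simps)
qed

lemma eventually_fract_eval_mult:
  "eventually (\<lambda>t. fract_eval (f * g) (h t) = fract_eval f (h t) * fract_eval g (h t)) (at a)"
proof -
  obtain p q r s where fg: "f = Fract p q" "q \<noteq> 0" "g = Fract r s" "s \<noteq> 0"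
    by (metis Fract_cases)
  have qs: "q * s \<noteq> 0" using fg by simp
  show ?thesis
    using eventually_fract_eval[OF fg(2), of p] eventually_fract_eval[OF fg(4), of r]
      eventually_fract_eval[OF qs, of "p * r"]
    unfolding fg(1,3) by eventually_elim simp
qed

lemma eventually_fract_eval_inverse:
  assumes "f \<noteq> 0"
  shows "eventually (\<lambda>t. fract_eval (inverse f) (h t) = inverse (fract_eval f (h t))) (at a)"
proof -
  obtain p q where f: "f = Fract p q" "q \<noteq> 0" "p \<noteq> 0"
    using assms by (metis Fract_cases_nonzero)
  show ?thesis
    using eventually_fract_eval[OF f(2), of p] eventually_fract_eval[OF f(3), of q]
    unfolding f(1) inverse_fract by eventually_elim simp
qed

lemma eventually_fract_eval_nonzero:
  assumes "f \<noteq> 0"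
  shows "eventually (\<lambda>t. fract_eval f (h t) \<noteq> 0) (at a)"
proof -
  obtain p q where f: "f = Fract p q" "q \<noteq> 0" "p \<noteq> 0"
    using assms by (metis Fract_cases_nonzero)
  show ?thesis
    using eventually_fract_eval[OF f(2), of p] eventually_poly_nonzero[OF f(3)]
    unfolding f(1) by eventually_elim simp
qed

lemma fract_eval_limit_or_infinity:
  assumes "f \<noteq> 0"
  shows "(\<exists>L. ((\<lambda>t. fract_eval f (h t)) \<longlongrightarrow> L) (at a)) \<or>
    filterlim (\<lambda>t. fract_eval f (h t)) at_infinity (at a)"
proof -
  obtain p q where f: "f = Fract p q" "q \<noteq> 0" "p \<noteq> 0"
    using assms by (metis Fract_cases_nonzero)
  have "eventually (\<lambda>t. poly p (h t) / poly q (h t) = fract_eval f (h t)) (at a)"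
    using eventually_fract_eval[OF f(2), of p] by eventually_elim (simp add: f(1))
  then show ?thesis
    using limit_or_infinity[OF f(3,2)] tendsto_cong filterlim_cong[OF refl refl] by metis
qed

definition lim_val :: "real poly fract \<Rightarrow> real option" where
  "lim_val f = (if \<exists>L. ((\<lambda>t. fract_eval f (h t)) \<longlongrightarrow> L) (at a)
    then Some (Lim (at a) (\<lambda>t. fract_eval f (h t))) else None)"

lemma lim_val_eqI: "((\<lambda>t. fract_eval f (h t)) \<longlongrightarrow> L) (at a) \<Longrightarrow> lim_val f = Some L"
  unfolding lim_val_def using tendsto_Lim[OF trivial_limit_at] by auto

lemma lim_val_SomeD: "lim_val f = Some L \<Longrightarrow> ((\<lambda>t. fract_eval f (h t)) \<longlongrightarrow> L) (at a)"
  unfolding lim_val_def by (metis option.distinct(1) option.inject tendsto_Lim trivial_limit_at)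

lemma lim_val_None_iff_no_limit: "lim_val f = None \<longleftrightarrow> \<not> (\<exists>L. ((\<lambda>t. fract_eval f (h t)) \<longlongrightarrow> L) (at a))"
  unfolding lim_val_def by simp

lemma lim_val_eventually_const:
  assumes "q \<noteq> 0" "eventually (\<lambda>t. poly p (h t) / poly q (h t) = c) (at a)"
  shows "lim_val (Fract p q) = Some c"
proof -
  have "eventually (\<lambda>t. c = fract_eval (Fract p q) (h t)) (at a)"
    using eventually_fract_eval[OF assms(1), of p] assms(2) by eventually_elim simp
  then show ?thesis by (rule lim_val_eqI[OF Lim_transform_eventually[OF tendsto_const]])
qed

lemma lim_val_zero_iff_inverse:
  assumes "f \<noteq> 0"
  shows "lim_val f = None \<longleftrightarrow> lim_val (inverse f) = Some 0"
proof
  assume "lim_val f = None"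
  then have "filterlim (\<lambda>t. fract_eval f (h t)) at_infinity (at a)"
    using fract_eval_limit_or_infinity[OF assms] lim_val_None_iff_no_limit by blast
  then have "((\<lambda>t. inverse (fract_eval f (h t))) \<longlongrightarrow> 0) (at a)"
    by (rule filterlim_compose[OF tendsto_inverse_0])
  then show "lim_val (inverse f) = Some 0"
    using tendsto_cong[OF eventually_fract_eval_inverse[OF assms]] lim_val_eqI by blast
next
  assume "lim_val (inverse f) = Some 0"
  then have inv: "((\<lambda>t. inverse (fract_eval f (h t))) \<longlongrightarrow> 0) (at a)"
    using tendsto_cong[OF eventually_fract_eval_inverse[OF assms]] lim_val_SomeD by blast
  show "lim_val f = None"
  proof (rule ccontr)
    assume "lim_val f \<noteq> None"
    then obtain L where "((\<lambda>t. fract_eval f (h t)) \<longlongrightarrow> L) (at a)" using lim_val_SomeD by blast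
    then have "((\<lambda>t. fract_eval f (h t) * inverse (fract_eval f (h t))) \<longlongrightarrow> L * 0) (at a)"
      using inv by (rule tendsto_mult)
    moreover have "eventually (\<lambda>t. fract_eval f (h t) * inverse (fract_eval f (h t)) = 1) (at a)"
      using eventually_fract_eval_nonzero[OF assms] by eventually_elim simp
    ultimately have "((\<lambda>t. 1::real) \<longlongrightarrow> 0) (at a)" using tendsto_cong by fastforce
    then show False by (simp add: tendsto_const_iff)
  qed
qed

lemma lim_val_pos:
  assumes bounds: "eventually (\<lambda>t. c \<le> fract_eval g (h t) \<and> fract_eval g (h t) \<le> C) (at a)"
    and c: "0 < c"
  shows "\<exists>r>0. lim_val g = Some r"
proof -
  have "g \<noteq> 0"
  proof
    assume "g = 0"
    then have "eventually (\<lambda>t. fract_eval g (h t) = 0) (at a)"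
      using eventually_fract_eval[of 1 0] by (simp add: fract_collapse eventually_mono)
    then have "eventually (\<lambda>t. False) (at a)"
      using bounds by eventually_elim (use c in simp)
    then show False by simp
  qed
  moreover have "\<not> filterlim (\<lambda>t. fract_eval g (h t)) at_infinity (at a)"
  proof
    assume "filterlim (\<lambda>t. fract_eval g (h t)) at_infinity (at a)"
    then have "eventually (\<lambda>t. \<bar>C\<bar> + 1 \<le> \<bar>fract_eval g (h t)\<bar>) (at a)"
      by (simp add: filterlim_at_infinity[of 0])
    then have "eventually (\<lambda>t. False) (at a)"
      using bounds by eventually_elim (use c in \<open>auto simp: abs_real_def split: if_splits\<close>)
    then show False by simp
  qed
  ultimately obtain L where L: "((\<lambda>t. fract_eval g (h t)) \<longlongrightarrow> L) (at a)"
    using fract_eval_limit_or_infinity by blast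
  moreover have "c \<le> L"
    using tendsto_lowerbound[OF L _ trivial_limit_at] bounds by (simp add: eventually_mono)
  ultimately show ?thesis using c lim_val_eqI by auto
qed

lemma place_on_lim_val: "place_on UNIV UNIV lim_val"
proof -
  have "lim_val 1 = Some 1" using lim_val_eventually_const[of 1 1 1] by (simp add: fract_collapse)
  moreover have "lim_val (f + g) = Some (x + y) \<and> lim_val (f * g) = Some (x * y)"
    if "lim_val f = Some x" "lim_val g = Some y" for f g x y
    using tendsto_add[OF lim_val_SomeD lim_val_SomeD, OF that] tendsto_mult[OF lim_val_SomeD lim_val_SomeD, OF that]
      tendsto_cong[OF eventually_fract_eval_add] tendsto_cong[OF eventually_fract_eval_mult] lim_val_eqI
    by metis
  ultimately show ?thesis using lim_val_zero_iff_inverse unfolding place_on_def by blast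
qed

end

interpretation point: limit_place "\<lambda>t. t" x for x
proof
  show "inj (\<lambda>t::real. t)" by (simp add: inj_on_def)
  fix p q :: "real poly" assume "p \<noteq> 0" "q \<noteq> 0"
  from poly_quotient_limit_or_infinity[OF this, of x] show "(\<exists>L. ((\<lambda>t. poly p t / poly q t) \<longlongrightarrow> L) (at x)) \<or>
      filterlim (\<lambda>t. poly p t / poly q t) at_infinity (at x)" .
qed

interpretation infty: limit_place inverse 0
proof
  show "inj (inverse :: real \<Rightarrow> real)" by (rule injI) simp
  fix p q :: "real poly" assume "p \<noteq> 0" "q \<noteq> 0"
  from poly_quotient_inverse_limit_or_infinity[OF this] show "(\<exists>L. ((\<lambda>t. poly p (inverse t) / poly q (inverse t)) \<longlongrightarrow> L) (at 0)) \<or>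
      filterlim (\<lambda>t. poly p (inverse t) / poly q (inverse t)) at_infinity (at 0)" .
qed

definition eval_place :: "real option \<Rightarrow> real poly fract \<Rightarrow> real option" where
  "eval_place v = (case v of Some a \<Rightarrow> point.lim_val a | None \<Rightarrow> infty.lim_val)"

definition place_at :: "real set \<Rightarrow> real option \<Rightarrow> real poly fract \<Rightarrow> real option" where
  "place_at S v f = (if f \<in> ratfun S then eval_place v f else None)"

lemma place_on_eval_place: "place_on UNIV UNIV (eval_place v)"
  by (cases v) (simp_all add: eval_place_def point.place_on_lim_val infty.place_on_lim_val)

lemma point_lim_val_cst: "point.lim_val x (cst c) = Some c"
  unfolding cst_def by (rule point.lim_val_eventually_const) simp_all
lemma infty_lim_val_cst: "infty.lim_val (cst c) = Some c"
  unfolding cst_def by (rule infty.lim_val_eventually_const) simp_all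

lemma point_lim_val_yvar: "point.lim_val x yvar = Some x"
proof -
  have "eventually (\<lambda>t. fract_eval yvar t = t) (at x)"
    using point.eventually_fract_eval[of 1 "[:0, 1:]"] unfolding yvar_def
    by (auto elim: eventually_mono)
  then have "((\<lambda>t. fract_eval yvar t) \<longlongrightarrow> x) (at x)"
    using tendsto_ident_at by (subst tendsto_cong)
  then show ?thesis by (rule point.lim_val_eqI)
qed

lemma infty_lim_val_yvar: "infty.lim_val yvar = None"
proof -
  have "eventually (\<lambda>t. fract_eval (inverse yvar) (inverse t) = t) (at 0)"
    using infty.eventually_fract_eval[of "[:0, 1:]" 1] unfolding yvar_def
    by (auto simp: divide_inverse elim: eventually_mono)
  then have "((\<lambda>t. fract_eval (inverse yvar) (inverse t)) \<longlongrightarrow> 0) (at 0)"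
    using tendsto_ident_at by (subst tendsto_cong)
  then have "infty.lim_val (inverse yvar) = Some 0" by (rule infty.lim_val_eqI)
  then show ?thesis using place_on_None_iff[OF infty.place_on_lim_val _ yvar_nonzero] by simp
qed

lemma eval_place_yvar: "eval_place v yvar = v"
  by (cases v) (simp_all add: eval_place_def point_lim_val_yvar infty_lim_val_yvar)

context fixes S :: "real set" assumes S: "is_subfield S"
begin

lemma place_on_place_at: "place_on (ratfun S) UNIV (place_at S v)"
  unfolding place_at_def[abs_def]
    using place_on_restrict[OF place_on_eval_place is_subfield_ratfun[OF S]] .

lemma place_at_in_M: "place_at S v \<in> M (ratfun S)"
  unfolding M_def using place_on_place_at by (simp add: place_at_def)

lemma place_at_cst: "c \<in> S \<Longrightarrow> place_at S v (cst c) = Some c"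
  using cst_in_ratfun[OF S]
  by (cases v) (simp_all add: place_at_def eval_place_def point_lim_val_cst infty_lim_val_cst)

lemma place_at_yvar: "place_at S v yvar = v"
  using yvar_in_ratfun[OF S] by (simp add: place_at_def eval_place_yvar)

lemma ratfun_place_place_at: "ratfun_place S (place_at S v)"
  using S place_on_place_at place_at_cst by (unfold_locales) auto

lemma M_ratfun_eq_place_at:
  assumes Q: "Q \<in> M (ratfun S)" "\<forall>c\<in>S. Q (cst c) = Some c"
  shows "Q = place_at S (Q yvar)"
proof
  fix f
  have SQ: "ratfun_place S Q" using S Q unfolding M_def by unfold_locales auto
  show "Q f = place_at S (Q yvar) f"
  proof (cases "f \<in> ratfun S")
    case True
    then show ?thesis using ratfun_place_unique[OF SQ ratfun_place_place_at] place_at_yvar by simp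
  next
    case False
    then show ?thesis using Q(1) unfolding M_def by (simp add: place_at_def)
  qed
qed

lemma const_ext_eq_place_at: "const_ext S \<zeta> = place_at S (\<zeta> yvar)"
  unfolding const_ext_def
proof (rule the_equality)
  show "place_at S (\<zeta> yvar) \<in> M (ratfun S) \<and> (\<forall>c\<in>S. place_at S (\<zeta> yvar) (cst c) = Some c) \<and> place_at S (\<zeta> yvar) yvar = \<zeta> yvar"
    using place_at_in_M place_at_cst place_at_yvar by simp
next
  fix Q assume "Q \<in> M (ratfun S) \<and> (\<forall>c\<in>S. Q (cst c) = Some c) \<and> Q yvar = \<zeta> yvar"
  then show "Q = place_at S (\<zeta> yvar)" using M_ratfun_eq_place_at by metis
qed

end

lemma cst_add: "cst (a + b) = cst a + cst b" by (simp add: cst_def)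
lemma cst_mult: "cst (a * b) = cst a * cst b" by (simp add: cst_def mult.commute)
lemma cst_diff: "cst (a - b) = cst a - cst b" by (simp add: cst_def)
lemma cst_0: "cst 0 = 0" by (simp add: cst_def fract_collapse)
lemma cst_1: "cst 1 = 1" by (simp add: cst_def fract_collapse pCons_one)
lemma cst_inverse: "cst (inverse a) = inverse (cst (a::real))"
  by (cases "a = 0") (simp_all add: cst_def eq_fract fract_collapse)
lemma cst_eq_0_iff: "cst a = 0 \<longleftrightarrow> (a::real) = 0"
  by (simp add: cst_def eq_fract Zero_fract_def)

text \<open>Nonnegative elements of \<open>R\<close> are squares, so a place of \<open>R(y)\<close> maps them into \<open>[0, \<infinity>]\<close>.
  Since it fixes \<open>\<int>\<close>, this monotonicity makes it finite on \<open>R \<subseteq> \<real>\<close> and then the identity there.\<close>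

locale square_closed_place =
  fixes R :: "real set" and \<zeta> :: "real poly fract \<Rightarrow> real option"
  assumes R: "is_subfield R" and sq: "\<forall>a\<in>R. a \<ge> 0 \<longrightarrow> (\<exists>b\<in>R. b * b = a)"
    and \<zeta>_place: "place_on (ratfun R) UNIV \<zeta>"
begin

abbreviation cval :: "real \<Rightarrow> real option" where "cval c \<equiv> \<zeta> (cst c)"

lemma ratfun_R: "is_subfield (ratfun R)" using is_subfield_ratfun[OF R] .
lemma cst_in: "c \<in> R \<Longrightarrow> cst c \<in> ratfun R" using cst_in_ratfun[OF R] .

lemma cval_add:
  "c \<in> R \<Longrightarrow> d \<in> R \<Longrightarrow> cval c = Some x \<Longrightarrow> cval d = Some y \<Longrightarrow> cval (c + d) = Some (x + y)"
  unfolding cst_add by (rule place_on_add[OF \<zeta>_place cst_in cst_in])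
lemma cval_mult:
  "c \<in> R \<Longrightarrow> d \<in> R \<Longrightarrow> cval c = Some x \<Longrightarrow> cval d = Some y \<Longrightarrow> cval (c * d) = Some (x * y)"
  unfolding cst_mult by (rule place_on_mult[OF \<zeta>_place cst_in cst_in])
lemma cval_diff:
  "c \<in> R \<Longrightarrow> d \<in> R \<Longrightarrow> cval c = Some x \<Longrightarrow> cval d = Some y \<Longrightarrow> cval (c - d) = Some (x - y)"
  unfolding cst_diff by (rule place_on_diff[OF \<zeta>_place ratfun_R cst_in cst_in])
lemma cval_zero: "cval 0 = Some 0" unfolding cst_0 using place_on_zero[OF \<zeta>_place ratfun_R] .
lemma cval_one: "cval 1 = Some 1" unfolding cst_1 using place_on_one[OF \<zeta>_place] .

lemma cval_of_nat: "cval (of_nat n) = Some (of_nat n)"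
proof (induction n)
  case 0 then show ?case using cval_zero by simp
next
  case (Suc n)
  have "cval (1 + of_nat n) = Some (1 + of_nat n)"
    by (rule cval_add[OF is_subfieldD(2)[OF R] is_subfield_of_nat[OF R] cval_one Suc])
  then show ?case by (simp add: add.commute)
qed

lemma cval_of_int: "cval (of_int k) = Some (of_int k)"
proof (cases k rule: int_cases)
  case (nonneg n) then show ?thesis using cval_of_nat by simp
next
  case (neg n)
  have "cval (0 - of_nat (Suc n)) = Some (0 - of_nat (Suc n))"
    by (rule cval_diff[OF is_subfieldD(1)[OF R] is_subfield_of_nat[OF R] cval_zero cval_of_nat])
  then show ?thesis using neg by simp
qed

lemma cval_square_None:
  assumes b: "b \<in> R" "cval b = None" shows "cval (b * b) = None"
proof -
  have b0: "b \<noteq> 0" using b cval_zero by auto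
  have "\<zeta> (inverse (cst b)) = Some 0"
    using place_on_inverse_of_None[OF \<zeta>_place cst_in[OF b(1)] _ b(2)] b0 cst_eq_0_iff by simp
  then have "cval (inverse b) = Some 0" by (simp add: cst_inverse)
  then have "cval (inverse b * inverse b) = Some (0 * 0)"
    using cval_mult is_subfieldD(6)[OF R b(1)] by blast
  then have "\<zeta> (inverse (cst (b * b))) = Some 0" by (simp add: cst_inverse[symmetric])
  moreover have "cst (b * b) \<noteq> 0" using b0 cst_eq_0_iff by simp
  ultimately have "\<zeta> (inverse (inverse (cst (b * b)))) = None"
    using place_on_inverse_of_zero[OF \<zeta>_place ratfun_R is_subfieldD(6)[OF ratfun_R cst_in[OF is_subfieldD(4)[OF R b(1) b(1)]]]]
    by simp
  then show ?thesis by simp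
qed

lemma cval_nonneg:
  assumes c: "c \<in> R" "0 \<le> c" "cval c = Some v" shows "0 \<le> v"
proof -
  obtain b where b: "b \<in> R" "b * b = c" using sq c by blast
  show ?thesis
  proof (cases "cval b")
    case None
    then show ?thesis using cval_square_None[OF b(1) None] b c by simp
  next
    case (Some w)
    then have "cval (b * b) = Some (w * w)" using cval_mult[OF b(1) b(1)] by blast
    then show ?thesis using b c by simp
  qed
qed

lemma cval_le_finite:
  assumes ab: "a \<in> R" "b \<in> R" "0 \<le> a" "a \<le> b" and Zb: "cval b \<noteq> None"
  shows "cval a \<noteq> None"
proof (cases "a = 0")
  case True then show ?thesis using cval_zero by simp
next
  case False
  then have a0: "0 < a" using ab by simp
  obtain e where e: "e \<in> R" "e * e = a" using sq ab by blast
  obtain d where d: "d \<in> R" "d * d = b - a"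
    using sq ab is_subfield_diff[OF R] by (metis diff_ge_0_iff_ge)
  have e0: "e \<noteq> 0" using e a0 by auto
  show ?thesis
  proof
    assume N: "cval a = None"
    obtain y where y: "cval b = Some y" using Zb by auto
    have "\<zeta> (inverse (cst a)) = Some 0"
      using place_on_inverse_of_None[OF \<zeta>_place cst_in[OF ab(1)] _ N] False cst_eq_0_iff by simp
    then have ia: "cval (inverse a) = Some 0" by (simp add: cst_inverse)
    have iaR: "inverse a \<in> R" using is_subfieldD(6)[OF R ab(1)] .
    have "cval (b * inverse a) = Some (y * 0)" by (rule cval_mult[OF ab(2) iaR y ia])
    then have "cval (b * inverse a - 1) = Some (y * 0 - 1)"
      using cval_diff[OF is_subfieldD(4)[OF R ab(2) iaR] is_subfieldD(2)[OF R] _ cval_one] by blast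
    moreover have "b * inverse a - 1 = (d / e) * (d / e)"
      using e d e0 a0 by (simp add: field_simps)
    ultimately have Zde: "cval ((d / e) * (d / e)) = Some (-1)" by simp
    have deR: "(d / e) * (d / e) \<in> R"
      using is_subfield_divide[OF R d(1) e(1)] is_subfieldD(4)[OF R] by blast
    have "0 \<le> (-1::real)" by (rule cval_nonneg[OF deR _ Zde]) simp
    then show False by simp
  qed
qed

lemma cval_finite:
  assumes c: "c \<in> R"
  shows "cval c \<noteq> None"
proof
  assume "cval c = None"
  then have "cval (c * c) = None" using cval_square_None[OF c] by simp
  obtain n :: nat where n: "\<bar>c\<bar> < of_nat n" using reals_Archimedean2 by blast
  have nR: "of_nat n \<in> R" using is_subfield_of_nat[OF R] .
  have "c * c \<le> of_nat n * of_nat n"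
    using n abs_mult_self_eq[of c] mult_mono[of "\<bar>c\<bar>" "of_nat n" "\<bar>c\<bar>" "of_nat n"] by simp
  moreover have "cval (of_nat n * of_nat n) \<noteq> None"
    using cval_mult[OF nR nR cval_of_nat cval_of_nat] by simp
  ultimately have "cval (c * c) \<noteq> None"
    using cval_le_finite[OF is_subfieldD(4)[OF R c c] is_subfieldD(4)[OF R nR nR]] by simp
  with \<open>cval (c * c) = None\<close> show False by simp
qed

lemma cval_eq:
  assumes c: "c \<in> R"
  shows "cval c = Some c"
proof -
  obtain v where v: "cval c = Some v" using cval_finite[OF c] by auto
  have "v = c"
  proof (rule ccontr)
    assume vc: "v \<noteq> c"
    then have "0 < \<bar>v - c\<bar>" by simp
    then obtain N :: nat where N: "1 < of_nat N * \<bar>v - c\<bar>" using ex_less_of_nat_mult by blast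
    define k where "k = \<lfloor>of_nat N * c\<rfloor>"
    have k1: "of_int k \<le> of_nat N * c" "of_nat N * c < of_int k + 1" unfolding k_def by linarith+
    have NcR: "of_nat N * c \<in> R" using is_subfieldD(4)[OF R is_subfield_of_nat[OF R] c] .
    have ZNc: "cval (of_nat N * c) = Some (of_nat N * v)"
      by (rule cval_mult[OF is_subfield_of_nat[OF R] c cval_of_nat v])
    have z1: "cval (of_nat N * c - of_int k) = Some (of_nat N * v - of_int k)"
      by (rule cval_diff[OF NcR is_subfield_of_int[OF R] ZNc cval_of_int])
    have a1: "0 \<le> of_nat N * v - of_int k"
      by (rule cval_nonneg[OF is_subfield_diff[OF R NcR is_subfield_of_int[OF R]] _ z1]) (use k1 in simp)
    have kR: "of_int k + 1 \<in> R"
      using is_subfieldD(3)[OF R is_subfield_of_int[OF R] is_subfieldD(2)[OF R]] .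
    have Zk: "cval (of_int k + 1) = Some (of_int k + 1)" using cval_of_int[of "k + 1"] by simp
    have z2: "cval (of_int k + 1 - of_nat N * c) = Some (of_int k + 1 - of_nat N * v)"
      by (rule cval_diff[OF kR NcR Zk ZNc])
    have a2: "0 \<le> of_int k + 1 - of_nat N * v"
      by (rule cval_nonneg[OF is_subfield_diff[OF R kR NcR] _ z2]) (use k1 in simp)
    have "\<bar>of_nat N * v - of_nat N * c\<bar> \<le> 1" using a1 a2 k1 by linarith
    then have "of_nat N * \<bar>v - c\<bar> \<le> 1" by (simp add: abs_mult right_diff_distrib[symmetric])
    then show False using N by simp
  qed
  then show ?thesis using v by simp
qed

end

lemma point_lim_val_pos_on_open:
  assumes "open U" "t \<in> U" "0 < r" and near: "\<forall>s\<in>U. dist (fract_eval g s) r < r / 2"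
  shows "\<exists>r'>0. point.lim_val t g = Some r'"
proof -
  have "eventually (\<lambda>s. s \<in> U) (at t)"
    using assms(1,2) eventually_at_topological by blast
  then have "eventually (\<lambda>s. r / 2 \<le> fract_eval g s \<and> fract_eval g s \<le> 3 * r / 2) (at t)"
  proof eventually_elim
    case (elim s)
    then have "\<bar>fract_eval g s - r\<bar> < r / 2" using near by (simp add: dist_real_def)
    then show ?case by linarith
  qed
  then show ?thesis by (rule point.lim_val_pos) (use assms(3) in simp)
qed

lemma point_lim_val_pos_nbhd:
  assumes "point.lim_val a g = Some r" "r > 0"
  shows "\<exists>\<delta>>0. \<forall>t. \<bar>t - a\<bar> < \<delta> \<longrightarrow> (\<exists>r'>0. point.lim_val t g = Some r')"
proof -
  have "eventually (\<lambda>s. dist (fract_eval g s) r < r / 2) (at a)"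
    using tendstoD[OF point.lim_val_SomeD[OF assms(1)], of "r / 2"] assms(2) by simp
  then obtain \<delta> where \<delta>: "\<delta> > 0" "\<forall>s. s \<noteq> a \<and> dist s a < \<delta> \<longrightarrow> dist (fract_eval g s) r < r / 2"
    unfolding eventually_at by auto
  have "\<exists>r'>0. point.lim_val t g = Some r'" if "\<bar>t - a\<bar> < \<delta>" "t \<noteq> a" for t
    using that \<delta>(2) assms(2)
    by (intro point_lim_val_pos_on_open[of "ball a \<delta> - {a}"]) (auto simp: dist_real_def abs_minus_commute)
  then show ?thesis using assms \<delta>(1) by metis
qed

lemma infty_lim_val_pos_nbhd:
  assumes "infty.lim_val g = Some r" "r > 0"
  shows "\<exists>T. \<forall>t. T < \<bar>t\<bar> \<longrightarrow> (\<exists>r'>0. point.lim_val t g = Some r')"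
proof -
  have "eventually (\<lambda>s. dist (fract_eval g (inverse s)) r < r / 2) (at 0)"
    using tendstoD[OF infty.lim_val_SomeD[OF assms(1)], of "r / 2"] assms(2) by simp
  then obtain \<delta> where \<delta>: "\<delta> > 0" "\<forall>s. s \<noteq> 0 \<and> dist s 0 < \<delta> \<longrightarrow> dist (fract_eval g (inverse s)) r < r / 2"
    unfolding eventually_at by auto
  have "dist (fract_eval g u) r < r / 2" if u: "inverse \<delta> < \<bar>u\<bar>" for u
  proof -
    have "\<bar>inverse u\<bar> < \<delta>" "u \<noteq> 0"
      using u \<delta>(1) by (auto simp: abs_inverse intro: inverse_less_imp_less)
    then show ?thesis using \<delta>(2)[rule_format, of "inverse u"] by (simp add: dist_real_def)
  qed
  moreover have "open {u::real. inverse \<delta> < \<bar>u\<bar>}"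
    by (intro open_Collect_less continuous_intros)
  ultimately have "\<exists>r'>0. point.lim_val t g = Some r'" if "inverse \<delta> < \<bar>t\<bar>" for t
    using that assms(2) by (intro point_lim_val_pos_on_open[of "{u. inverse \<delta> < \<bar>u\<bar>}"]) auto
  then show ?thesis by blast
qed

lemma topspace_Mtop:
  assumes K: "is_subfield K"
  shows "topspace (Mtop K) = M K"
proof -
  have "z \<in> H' K 1" if "z \<in> M K" for z
    using that place_on_one unfolding M_def H'_def by fastforce
  then show ?thesis
    using is_subfieldD(2)[OF K] unfolding Mtop_def by (auto simp: H'_def)
qed

lemma openin_Mtop_H': "b \<in> K \<Longrightarrow> openin (Mtop K) (H' K b)"
  unfolding Mtop_def by (rule topology_generated_by_Basis) blast

context
  fixes R :: "real set"
  assumes R: "is_subfield R" and sq: "\<forall>a\<in>R. a \<ge> 0 \<longrightarrow> (\<exists>b\<in>R. b * b = a)"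
begin

lemma M_ratfun_eq_place_at_yvar: "z \<in> M (ratfun R) \<Longrightarrow> z = place_at R (z yvar)"
proof -
  assume z: "z \<in> M (ratfun R)"
  interpret square_closed_place R z using R sq z unfolding M_def by unfold_locales auto
  show ?thesis using M_ratfun_eq_place_at[OF R z] cval_eq by blast
qed

lemma ratfun_place_M: "z \<in> M (ratfun R) \<Longrightarrow> ratfun_place R z"
  by (metis M_ratfun_eq_place_at_yvar ratfun_place_place_at[OF R])

lemma openin_yvar_interval:
  assumes cd: "c \<in> R" "d \<in> R" "c < d"
  shows "openin (Mtop (ratfun R)) {z \<in> M (ratfun R). \<exists>t. z yvar = Some t \<and> c < t \<and> t < d}"
proof -
  define p where "p = [:- c, 1:] * [:d, - 1:]"
  have p: "poly_over R p"
    unfolding p_def using cd is_subfieldD(2,5)[OF R]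
    by (intro poly_over_mult[OF R] poly_over_linear[OF R]) auto
  have deg_p: "degree p = 2" by (simp add: p_def degree_mult_eq)
  have "H' (ratfun R) (Fract p 1) = {z \<in> M (ratfun R). \<exists>t. z yvar = Some t \<and> c < t \<and> t < d}"
  proof (intro set_eqI iffI)
    fix z assume "z \<in> H' (ratfun R) (Fract p 1)"
    then obtain s where z: "z \<in> M (ratfun R)" "z (Fract p 1) = Some s" "s > 0"
      unfolding H'_def by auto
    interpret ratfun_place R z using ratfun_place_M[OF z(1)] .
    obtain t where t: "z yvar = Some t"
      using value_at_infinity[OF _ p poly_over_1[OF R]] z(2) deg_p by (cases "z yvar") auto
    then have "(t - c) * (d - t) > 0"
      using value_poly[OF t p] z(2,3) by (simp add: p_def algebra_simps)
    then show "z \<in> {z \<in> M (ratfun R). \<exists>t. z yvar = Some t \<and> c < t \<and> t < d}"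
      using z(1) t cd(3) by (auto simp: zero_less_mult_iff)
  next
    fix z assume "z \<in> {z \<in> M (ratfun R). \<exists>t. z yvar = Some t \<and> c < t \<and> t < d}"
    then obtain t where z: "z \<in> M (ratfun R)" "z yvar = Some t" "c < t" "t < d" by auto
    interpret ratfun_place R z using ratfun_place_M[OF z(1)] .
    have "z (Fract p 1) = Some ((t - c) * (d - t))"
      using value_poly[OF z(2) p] by (simp add: p_def algebra_simps)
    moreover have "0 < (t - c) * (d - t)" using z(3,4) by simp
    ultimately show "z \<in> H' (ratfun R) (Fract p 1)" using z(1) unfolding H'_def by blast
  qed
  then show ?thesis using openin_Mtop_H'[OF poly_in_ratfun[OF R p]] by simp
qed

lemma openin_yvar_outside:
  assumes c: "c \<in> R" "0 < c"
  shows "openin (Mtop (ratfun R)) {z \<in> M (ratfun R). \<forall>t. z yvar = Some t \<longrightarrow> c < \<bar>t\<bar>}"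
proof -
  define p :: "real poly" where "p = [:0, 1:] * [:0, 1:]"
  define q where "q = [:- c, 1:] * [:c, 1:]"
  have "poly_over R p"
    unfolding p_def
      using is_subfieldD(1,2)[OF R] by (intro poly_over_mult[OF R] poly_over_linear[OF R])
  moreover have "poly_over R q"
    unfolding q_def
      using c is_subfieldD(2,5)[OF R] by (intro poly_over_mult[OF R] poly_over_linear[OF R])
  ultimately have pq: "poly_over R p" "poly_over R q" "q \<noteq> 0" by (simp_all add: q_def)
  have poly_pq: "poly p t = t * t" "poly q t = t * t - c * c" for t
    by (simp_all add: p_def q_def algebra_simps)
  have "H' (ratfun R) (Fract p q) = {z \<in> M (ratfun R). \<forall>t. z yvar = Some t \<longrightarrow> c < \<bar>t\<bar>}"
  proof (intro set_eqI iffI)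
    fix z assume "z \<in> H' (ratfun R) (Fract p q)"
    then obtain s where z: "z \<in> M (ratfun R)" "z (Fract p q) = Some s" "s > 0"
      unfolding H'_def by auto
    interpret ratfun_place R z using ratfun_place_M[OF z(1)] .
    have "c < \<bar>t\<bar>" if t: "z yvar = Some t" for t
    proof (cases "t * t = c * c")
      case True
      then show ?thesis using value_Fract_pole[OF t pq] poly_pq c(2) z(2) by simp
    next
      case False
      then have "0 < t * t / (t * t - c * c)"
        using value_Fract[OF t pq(1,2)] poly_pq z(2,3) by simp
      then have "c * c < \<bar>t\<bar> * \<bar>t\<bar>" by (auto simp: zero_less_divide_iff abs_mult_self_eq)
      show ?thesis
      proof (rule ccontr)
        assume "\<not> c < \<bar>t\<bar>"
        then have "\<bar>t\<bar> * \<bar>t\<bar> \<le> c * c" using c(2) by (intro mult_mono) auto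
        with \<open>c * c < \<bar>t\<bar> * \<bar>t\<bar>\<close> show False by simp
      qed
    qed
    then show "z \<in> {z \<in> M (ratfun R). \<forall>t. z yvar = Some t \<longrightarrow> c < \<bar>t\<bar>}" using z(1) by blast
  next
    fix z assume z: "z \<in> {z \<in> M (ratfun R). \<forall>t. z yvar = Some t \<longrightarrow> c < \<bar>t\<bar>}"
    then have zM: "z \<in> M (ratfun R)" by blast
    interpret ratfun_place R z using ratfun_place_M[OF zM] .
    have "\<exists>s>0. z (Fract p q) = Some s"
    proof (cases "z yvar")
      case None
      then show ?thesis
        using value_at_infinity[OF None pq] by (simp add: p_def q_def degree_mult_eq)
    next
      case (Some t)
      then have "c < \<bar>t\<bar>" using z by blast
      then have "c * c < \<bar>t\<bar> * \<bar>t\<bar>" using c(2) by (intro mult_strict_mono) auto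
      then have "c * c < t * t" by (simp add: abs_mult_self_eq)
      moreover have "0 < c * c" using c(2) by simp
      ultimately show ?thesis using value_Fract[OF Some pq(1,2)] poly_pq by simp
    qed
    then show "z \<in> H' (ratfun R) (Fract p q)" using zM unfolding H'_def by blast
  qed
  then show ?thesis using openin_Mtop_H'[OF Fract_in_ratfun[OF pq]] by simp
qed

lemma openin_eval_place_pos:
  "openin (Mtop (ratfun R)) {z \<in> M (ratfun R). \<exists>r>0. eval_place (z yvar) g = Some r}"
  (is "openin _ ?U")
proof (subst openin_subopen, intro ballI)
  fix z0 assume z0: "z0 \<in> ?U"
  then obtain r where r: "r > 0" "eval_place (z0 yvar) g = Some r" by blast
  have sub: "z \<in> ?U" if "z \<in> M (ratfun R)" "z yvar = Some t" "\<exists>r'>0. point.lim_val t g = Some r'" for z t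
    using that by (simp add: eval_place_def)
  show "\<exists>T. openin (Mtop (ratfun R)) T \<and> z0 \<in> T \<and> T \<subseteq> ?U"
  proof (cases "z0 yvar")
    case (Some a)
    have "point.lim_val a g = Some r" using r Some by (simp add: eval_place_def)
    then obtain \<delta> where \<delta>: "\<delta> > 0" "\<forall>t. \<bar>t - a\<bar> < \<delta> \<longrightarrow> (\<exists>r'>0. point.lim_val t g = Some r')"
      using point_lim_val_pos_nbhd r(1) by blast
    obtain c where c: "c \<in> \<rat>" "a - \<delta> < c" "c < a"
      using Rats_dense_in_real[of "a - \<delta>" a] \<delta>(1) by auto
    obtain d where d: "d \<in> \<rat>" "a < d" "d < a + \<delta>"
      using Rats_dense_in_real[of a "a + \<delta>"] \<delta>(1) by auto
    have "c \<in> R" "d \<in> R" using c(1) d(1) Rats_subset_subfield[OF R] by auto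
    then show ?thesis
      using openin_yvar_interval[of c d] z0 Some c d \<delta>(2) sub by (intro exI conjI) auto
  next
    case None
    have "infty.lim_val g = Some r" using r None by (simp add: eval_place_def)
    then obtain T where T: "\<forall>t. T < \<bar>t\<bar> \<longrightarrow> (\<exists>r'>0. point.lim_val t g = Some r')"
      using infty_lim_val_pos_nbhd r(1) by blast
    obtain n :: nat where n: "max T 1 < n" using reals_Archimedean2 by blast
    have "of_nat n \<in> R" using is_subfield_of_nat[OF R] .
    moreover have "z \<in> ?U" if "z \<in> M (ratfun R)" "\<forall>t. z yvar = Some t \<longrightarrow> of_nat n < \<bar>t\<bar>" for z
      using that T n sub[OF that(1)] z0 None by (cases "z yvar") (auto simp: eval_place_def)
    ultimately show ?thesis
      using openin_yvar_outside[of "of_nat n"] z0 None n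
      by (intro exI[of _ "{z \<in> M (ratfun R). \<forall>t. z yvar = Some t \<longrightarrow> of_nat n < \<bar>t\<bar>}"]) auto
  qed
qed

end

context real_valued_place
begin

lemma iota_eq_comp_place: "iota \<xi> z = comp_place (place_at (residue_field \<xi>) (z yvar)) gauss"
  unfolding iota_def
  using const_ext_eq_place_at[OF is_subfield_residue_field[OF \<xi>_place]] gauss_ext_eq_gauss by simp

lemma iota_in_M: "iota \<xi> z \<in> M UNIV"
  unfolding M_def iota_eq_comp_place
  using place_on_comp_place[OF place_on_gauss place_on_place_at is_subfield_ratfun]
    is_subfield_residue_field[OF \<xi>_place] by simp

lemma iota_apply: "iota \<xi> z b = (case gauss b of None \<Rightarrow> None | Some g \<Rightarrow> eval_place (z yvar) g)"
proof (cases "gauss b")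
  case (Some g)
  then have "g \<in> ratfun (residue_field \<xi>)" using place_on_range[OF place_on_gauss] by blast
  then show ?thesis using Some by (simp add: iota_eq_comp_place comp_place_def place_at_def)
qed (simp add: iota_eq_comp_place comp_place_def)

lemma iota_yvar: "iota \<xi> z yvar = z yvar"
proof -
  have "reduce [:0, 1:] = [:0, 1:]"
    by (simp add: poly_eq_iff coeff_reduce coeff_pCons residue_zero residue_one split: nat.split)
  then have "gauss yvar = Some yvar"
    using gauss_Fract_integral[of "[:0, 1:]"]
    by (simp add: yvar_def coeff_pCons xi_zero xi_one split: nat.split)
  then show ?thesis by (simp add: iota_apply eval_place_yvar)
qed

context
  fixes R :: "real set"
  assumes R: "is_subfield R" and sq: "\<forall>a\<in>R. a \<ge> 0 \<longrightarrow> (\<exists>b\<in>R. b * b = a)"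
begin

lemma continuous_map_iota: "continuous_map (Mtop (ratfun R)) (Mtop (UNIV :: 'f poly fract set)) (iota \<xi>)"
  unfolding Mtop_def[of "UNIV :: 'f poly fract set"]
proof (rule continuous_on_generated_topo)
  show "iota \<xi> ` topspace (Mtop (ratfun R)) \<subseteq> \<Union> {H' UNIV b |b. b \<in> UNIV}"
    using iota_in_M topspace_Mtop[OF is_subfield_UNIV] unfolding Mtop_def by auto
next
  fix U :: "('f poly fract \<Rightarrow> real option) set"
  assume "U \<in> {H' UNIV b |b. b \<in> UNIV}"
  then obtain b where U: "U = H' UNIV b" by blast
  have preimage: "iota \<xi> -` U \<inter> topspace (Mtop (ratfun R)) =
      {z \<in> M (ratfun R). \<exists>r>0. iota \<xi> z b = Some r}"
    using iota_in_M by (auto simp: U H'_def topspace_Mtop[OF is_subfield_ratfun[OF R]])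
  show "openin (Mtop (ratfun R)) (iota \<xi> -` U \<inter> topspace (Mtop (ratfun R)))"
  proof (cases "gauss b")
    case None
    then show ?thesis unfolding preimage by (simp add: iota_apply)
  next
    case (Some g)
    then show ?thesis unfolding preimage
      using openin_eval_place_pos[OF R sq, of g] by (simp add: iota_apply)
  qed
qed

lemma inj_on_iota: "inj_on (iota \<xi>) (M (ratfun R))"
proof (rule inj_onI)
  fix z1 z2 assume z: "z1 \<in> M (ratfun R)" "z2 \<in> M (ratfun R)" "iota \<xi> z1 = iota \<xi> z2"
  then have "z1 yvar = z2 yvar" using iota_yvar by metis
  then show "z1 = z2" using M_ratfun_eq_place_at_yvar[OF R sq] z(1,2) by metis
qed

end

end

theorem theorem6p2:
  fixes R :: "real set" and e :: "real \<Rightarrow> 'f::field" and \<xi> :: "'f \<Rightarrow> real option"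
  assumes "real_closed_subfield R" and "archimedean_set R"
    and "formally_real TYPE('f)"
    and "field_embedding_on R e"
    and "place_on (UNIV :: 'f set) UNIV \<xi>"
    and "\<forall>r\<in>R. \<xi> (e r) = Some r"
  shows "continuous_map (Mtop (ratfun R)) (Mtop (UNIV :: 'f poly fract set)) (iota \<xi>)
       \<and> inj_on (iota \<xi>) (M (ratfun R))"
proof -
  \<comment> \<open>\<open>R \<subseteq> \<real>\<close> is archimedean anyway, and \<open>\<iota>\<close> depends on \<open>\<xi>\<close> only through its residue field.\<close>
  interpret real_valued_place \<xi> by unfold_locales (rule assms(5))
  have "is_subfield R" and "\<forall>a\<in>R. a \<ge> 0 \<longrightarrow> (\<exists>b\<in>R. b * b = a)"
    using assms(1) unfolding real_closed_subfield_def by blast+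
  then show ?thesis using continuous_map_iota inj_on_iota by blast
qed

end
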